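(* Let $\gamma$ be an $n\times m$ integer matrix satisfying conditions (i) and (ii), and let $a\in\mathcal{A}(\gamma)^\pm$ be homogeneous of some degree $g\in\mathbb{Z}^m$. If $a^\ast a=0$, then $a=0$.
   Context: $\Bbbk$ is an algebraically closed field of characteristic $0$. Fix $p,q\ge0$, $n=p+q$, a sign $\pm$, $\mp=-\pm$; $p(i)=0$ for $i\le p$, $p(i)=1$ for $i>p$. $\lambda_{ij}=\mp(-1)^{p(i)p(j)}$; $R=R^\pm_{p|q}=\Bbbk[u_1,\dots,u_n]/(u_i^2-u_i\mid\lambda_{ii}=-1)$; $\tau_i\in\mathrm{Aut}(R)$ with $\tau_i(u_i)=\lambda_{ii}(u_i-1)$, $\tau_i(u_j)=u_j$ ($j\ne i$). TGW algebras: for a TGW datum $(R,\sigma,t)$ (commuting automorphisms $\sigma_i$, central $t_i$) and nonzero scalars $\mu_{ij}$ ($i\ne j$), $\mathcal{A}_\mu(R,\sigma,t)$ is the quotient of the $R$-ring generated by $X_i,Y_i$ with relations $X_ir=\sigma_i(r)X_i$, $Y_ir=\sigma_i^{-1}(r)Y_i$, $Y_iX_i=t_i$, $X_iY_i=\sigma_i(t_i)$, $X_iY_j=\mu_{ij}Y_jX_i$ ($i\ne j$), graded by $\deg X_i=\mathbf{e}_i=-\deg Y_i$, $\deg R=0$, by the largest graded ideal meeting the degree-zero part trivially. The family $\mathcal{A}(\gamma)^\pm$: $\gamma=(\gamma_{ji})$ is an $n\times m$ integer matrix with (i) $|\gamma_{ji}|\le1$ whenever $\lambda_{jj}=-1$,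 and (ii) for all $i\ne i'$, either $\gamma_{ki}\gamma_{ki'}<0$ for some $k$ with $\lambda_{kk}=-1$, or $\gamma_{ki}\gamma_{ki'}\le0$ for all $k$. Then $\mathcal{A}(\gamma)^\pm=\mathcal{A}_\mu(R,\sigma,t)$ with index set $\{1,\dots,m\}$, $\sigma_i=\tau_1^{\gamma_{1i}}\cdots\tau_n^{\gamma_{ni}}$, $t_i=\prod_{j=1}^nu_{ji}$ with $u_{ji}=(u_j+\gamma_{ji}-1)\cdots(u_j+1)u_j$ if $\gamma_{ji}>0$, $1$ if $\gamma_{ji}=0$, $(u_j-|\gamma_{ji}|)\cdots(u_j-1)$ if $\gamma_{ji}<0$; and $\mu_{ij}=(\mp1)^{p'(i)p'(j)}(-1)^{\bar p(i)\bar p(j)}$ with $\bar p(i)=\sum_k\gamma_{ki}p(k)\bmod2$, $p'(i)=\sum_k\gamma_{ki}\bmod2$. Since $\mu$ is symmetric, $\mathcal{A}(\gamma)^\pm$ carries the involution $\ast$ (additive, $(ab)^\ast=b^\ast a^\ast$, $(a^\ast)^\ast=a$) with $X_i^\ast=Y_i$, $Y_i^\ast=X_i$, $r^\ast=r$ for $r\in R$. *)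

theory Defs
  imports "HOL-Library.Poly_Mapping" "HOL-Computational_Algebra.Polynomial"
begin

type_synonym 'k pol = "(nat \<Rightarrow>\<^sub>0 nat) \<Rightarrow>\<^sub>0 'k"

definition pc :: "'k::comm_ring_1 \<Rightarrow> 'k pol" where
  "pc c = Poly_Mapping.single 0 c"

definition var :: "nat \<Rightarrow> 'k::comm_ring_1 pol" where
  "var j = Poly_Mapping.single (Poly_Mapping.single j 1) 1"

definition psubst :: "(nat \<Rightarrow> 'k::comm_ring_1 pol) \<Rightarrow> 'k pol \<Rightarrow> 'k pol" where
  "psubst phi r = (\<Sum>mon\<in>Poly_Mapping.keys r.
      pc (Poly_Mapping.lookup r mon) * (\<Prod>v\<in>Poly_Mapping.keys mon. phi v ^ Poly_Mapping.lookup mon v))"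

definition par :: "nat \<Rightarrow> nat \<Rightarrow> int" where
  "par p i = (if i \<le> p then 0 else 1)"

text \<open>pm is the sign (+1 or -1), so mp = -pm.\<close>
definition lam :: "nat \<Rightarrow> int \<Rightarrow> nat \<Rightarrow> nat \<Rightarrow> int" where
  "lam p pm i j = (- pm) * (-1) ^ nat (par p i * par p j)"

definition tau :: "nat \<Rightarrow> int \<Rightarrow> nat \<Rightarrow> 'k::comm_ring_1 pol \<Rightarrow> 'k pol" where
  "tau p pm j = psubst (\<lambda>v. if v = j then of_int (lam p pm j j) * (var j - 1) else var v)"

definition tau_inv :: "nat \<Rightarrow> int \<Rightarrow> nat \<Rightarrow> 'k::comm_ring_1 pol \<Rightarrow> 'k pol" where
  "tau_inv p pm j = psubst (\<lambda>v. if v = j then of_int (lam p pm j j) * var j + 1 else var v)"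

definition tau_pow :: "nat \<Rightarrow> int \<Rightarrow> nat \<Rightarrow> int \<Rightarrow> 'k::comm_ring_1 pol \<Rightarrow> 'k pol" where
  "tau_pow p pm j k = (if 0 \<le> k then tau p pm j ^^ nat k else tau_inv p pm j ^^ nat (- k))"

definition sigma :: "nat \<Rightarrow> nat \<Rightarrow> int \<Rightarrow> (nat \<Rightarrow> nat \<Rightarrow> int) \<Rightarrow> nat \<Rightarrow> 'k::comm_ring_1 pol \<Rightarrow> 'k pol" where
  "sigma p q pm \<gamma> i = foldr (\<lambda>j f. tau_pow p pm j (\<gamma> j i) \<circ> f) [1..<p+q+1] id"

definition sigma_inv :: "nat \<Rightarrow> nat \<Rightarrow> int \<Rightarrow> (nat \<Rightarrow> nat \<Rightarrow> int) \<Rightarrow> nat \<Rightarrow> 'k::comm_ring_1 pol \<Rightarrow> 'k pol" where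
  "sigma_inv p q pm \<gamma> i = foldr (\<lambda>j f. tau_pow p pm j (- \<gamma> j i) \<circ> f) [1..<p+q+1] id"

definition uji :: "(nat \<Rightarrow> nat \<Rightarrow> int) \<Rightarrow> nat \<Rightarrow> nat \<Rightarrow> 'k::comm_ring_1 pol" where
  "uji \<gamma> j i = (if \<gamma> j i > 0 then (\<Prod>l\<in>{0..<nat (\<gamma> j i)}. var j + of_nat l)
                 else if \<gamma> j i < 0 then (\<Prod>l\<in>{1..nat (- \<gamma> j i)}. var j - of_nat l)
                 else 1)"

definition tt :: "nat \<Rightarrow> nat \<Rightarrow> (nat \<Rightarrow> nat \<Rightarrow> int) \<Rightarrow> nat \<Rightarrow> 'k::comm_ring_1 pol" where
  "tt p q \<gamma> i = (\<Prod>j\<in>{1..p+q}. uji \<gamma> j i)"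

definition pprime :: "nat \<Rightarrow> nat \<Rightarrow> (nat \<Rightarrow> nat \<Rightarrow> int) \<Rightarrow> nat \<Rightarrow> int" where
  "pprime p q \<gamma> i = (\<Sum>k\<in>{1..p+q}. \<gamma> k i) mod 2"

definition pbar :: "nat \<Rightarrow> nat \<Rightarrow> (nat \<Rightarrow> nat \<Rightarrow> int) \<Rightarrow> nat \<Rightarrow> int" where
  "pbar p q \<gamma> i = (\<Sum>k\<in>{1..p+q}. \<gamma> k i * par p k) mod 2"

definition mu :: "nat \<Rightarrow> nat \<Rightarrow> int \<Rightarrow> (nat \<Rightarrow> nat \<Rightarrow> int) \<Rightarrow> nat \<Rightarrow> nat \<Rightarrow> 'k::comm_ring_1" where
  "mu p q pm \<gamma> i j = of_int ((- pm) ^ nat (pprime p q \<gamma> i * pprime p q \<gamma> j)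
                        * (-1) ^ nat (pbar p q \<gamma> i * pbar p q \<gamma> j))"

datatype gsym = GX nat | GY nat

fun sidx :: "gsym \<Rightarrow> nat" where
  "sidx (GX i) = i" | "sidx (GY i) = i"

fun sswap :: "gsym \<Rightarrow> gsym" where
  "sswap (GX i) = GY i" | "sswap (GY i) = GX i"

text \<open>Elements: finite sums of (coefficient on the left) * word.\<close>
type_synonym 'k tgw = "gsym list \<Rightarrow>\<^sub>0 'k pol"

fun ssig :: "nat \<Rightarrow> nat \<Rightarrow> int \<Rightarrow> (nat \<Rightarrow> nat \<Rightarrow> int) \<Rightarrow> gsym \<Rightarrow> 'k::comm_ring_1 pol \<Rightarrow> 'k pol" where
  "ssig p q pm \<gamma> (GX i) = sigma p q pm \<gamma> i"
| "ssig p q pm \<gamma> (GY i) = sigma_inv p q pm \<gamma> i"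

text \<open>w r = sigw w (r) w for a word w.\<close>
fun sigw :: "nat \<Rightarrow> nat \<Rightarrow> int \<Rightarrow> (nat \<Rightarrow> nat \<Rightarrow> int) \<Rightarrow> gsym list \<Rightarrow> 'k::comm_ring_1 pol \<Rightarrow> 'k pol" where
  "sigw p q pm \<gamma> [] = id"
| "sigw p q pm \<gamma> (s # w) = ssig p q pm \<gamma> s \<circ> sigw p q pm \<gamma> w"

definition gmult :: "nat \<Rightarrow> nat \<Rightarrow> int \<Rightarrow> (nat \<Rightarrow> nat \<Rightarrow> int) \<Rightarrow> 'k::comm_ring_1 tgw \<Rightarrow> 'k tgw \<Rightarrow> 'k tgw" where
  "gmult p q pm \<gamma> f h = (\<Sum>w\<in>Poly_Mapping.keys f. \<Sum>v\<in>Poly_Mapping.keys h.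
      Poly_Mapping.single (w @ v) (Poly_Mapping.lookup f w * sigw p q pm \<gamma> w (Poly_Mapping.lookup h v)))"

definition Fcar :: "nat \<Rightarrow> nat \<Rightarrow> 'k::comm_ring_1 tgw set" where
  "Fcar n m = {f. (\<forall>w\<in>Poly_Mapping.keys f. \<forall>s\<in>set w. sidx s \<in> {1..m})
                \<and> (\<forall>w\<in>Poly_Mapping.keys f. \<forall>mon\<in>Poly_Mapping.keys (Poly_Mapping.lookup f w).
                     Poly_Mapping.keys mon \<subseteq> {1..n})}"

fun wdeg :: "gsym list \<Rightarrow> nat \<Rightarrow> int" where
  "wdeg [] = (\<lambda>_. 0)"
| "wdeg (GX i # w) = (\<lambda>k. (if k = i then 1 else 0) + wdeg w k)"
| "wdeg (GY i # w) = (\<lambda>k. (if k = i then -1 else 0) + wdeg w k)"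

definition homog :: "(nat \<Rightarrow> int) \<Rightarrow> 'k::comm_ring_1 tgw \<Rightarrow> bool" where
  "homog g f \<longleftrightarrow> (\<forall>w\<in>Poly_Mapping.keys f. wdeg w = g)"

definition hcomp :: "(nat \<Rightarrow> int) \<Rightarrow> 'k::comm_ring_1 tgw \<Rightarrow> 'k tgw" where
  "hcomp g f = (\<Sum>w\<in>{w\<in>Poly_Mapping.keys f. wdeg w = g}. Poly_Mapping.single w (Poly_Mapping.lookup f w))"

definition is_ideal :: "nat \<Rightarrow> nat \<Rightarrow> int \<Rightarrow> (nat \<Rightarrow> nat \<Rightarrow> int) \<Rightarrow> nat \<Rightarrow> 'k::comm_ring_1 tgw set \<Rightarrow> bool" where
  "is_ideal p q pm \<gamma> m J \<longleftrightarrow> J \<subseteq> Fcar (p+q) m \<and> 0 \<in> J \<and> (\<forall>a\<in>J. \<forall>b\<in>J. a - b \<in> J)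
     \<and> (\<forall>a\<in>J. \<forall>c\<in>Fcar (p+q) m. gmult p q pm \<gamma> c a \<in> J \<and> gmult p q pm \<gamma> a c \<in> J)"

definition graded_set :: "'k::comm_ring_1 tgw set \<Rightarrow> bool" where
  "graded_set J \<longleftrightarrow> (\<forall>a\<in>J. \<forall>g. hcomp g a \<in> J)"

definition gen_ideal :: "nat \<Rightarrow> nat \<Rightarrow> int \<Rightarrow> (nat \<Rightarrow> nat \<Rightarrow> int) \<Rightarrow> nat \<Rightarrow> 'k::comm_ring_1 tgw set \<Rightarrow> 'k tgw set" where
  "gen_ideal p q pm \<gamma> m S = \<Inter>{J. is_ideal p q pm \<gamma> m J \<and> S \<subseteq> J}"

text \<open>Defining relations: u_j^2 = u_j (lambda_jj = -1) (defining R), Y_iX_i = t_i,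
  X_iY_i = sigma_i(t_i), X_iY_j = mu_ij Y_jX_i (i \<noteq> j).\<close>
definition rels :: "nat \<Rightarrow> nat \<Rightarrow> int \<Rightarrow> (nat \<Rightarrow> nat \<Rightarrow> int) \<Rightarrow> nat \<Rightarrow> 'k::comm_ring_1 tgw set" where
  "rels p q pm \<gamma> m =
     {Poly_Mapping.single [] (var j ^ 2 - var j) | j. j \<in> {1..p+q} \<and> lam p pm j j = -1}
   \<union> {Poly_Mapping.single [GY i, GX i] 1 - Poly_Mapping.single [] (tt p q \<gamma> i) | i. i \<in> {1..m}}
   \<union> {Poly_Mapping.single [GX i, GY i] 1 - Poly_Mapping.single [] (sigma p q pm \<gamma> i (tt p q \<gamma> i)) | i. i \<in> {1..m}}
   \<union> {Poly_Mapping.single [GX i, GY j] 1 - Poly_Mapping.single [GY j, GX i] (pc (mu p q pm \<gamma> i j))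
        | i j. i \<in> {1..m} \<and> j \<in> {1..m} \<and> i \<noteq> j}"

definition Irel :: "nat \<Rightarrow> nat \<Rightarrow> int \<Rightarrow> (nat \<Rightarrow> nat \<Rightarrow> int) \<Rightarrow> nat \<Rightarrow> 'k::comm_ring_1 tgw set" where
  "Irel p q pm \<gamma> m = gen_ideal p q pm \<gamma> m (rels p q pm \<gamma> m)"

text \<open>Preimage of the largest graded ideal of F/Irel meeting the degree-zero part trivially:
  the kernel of F -> A(gamma)^pm.\<close>
definition Imax :: "nat \<Rightarrow> nat \<Rightarrow> int \<Rightarrow> (nat \<Rightarrow> nat \<Rightarrow> int) \<Rightarrow> nat \<Rightarrow> 'k::comm_ring_1 tgw set" where
  "Imax p q pm \<gamma> m = {a. \<exists>J. is_ideal p q pm \<gamma> m J \<and> graded_set J \<and> Irel p q pm \<gamma> m \<subseteq> J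
       \<and> J \<inter> {b. homog (\<lambda>_. 0) b} \<subseteq> Irel p q pm \<gamma> m \<and> a \<in> J}"

text \<open>The involution: X_i^* = Y_i, Y_i^* = X_i, r^* = r; (r w)^* = w^* r = sigw(w^*)(r) w^*.\<close>
definition starw :: "gsym list \<Rightarrow> gsym list" where
  "starw w = rev (map sswap w)"

definition gstar :: "nat \<Rightarrow> nat \<Rightarrow> int \<Rightarrow> (nat \<Rightarrow> nat \<Rightarrow> int) \<Rightarrow> 'k::comm_ring_1 tgw \<Rightarrow> 'k tgw" where
  "gstar p q pm \<gamma> f = (\<Sum>w\<in>Poly_Mapping.keys f.
      Poly_Mapping.single (starw w) (sigw p q pm \<gamma> (starw w) (Poly_Mapping.lookup f w)))"

end

theory Submission
  imports Defs "HOL-Library.Function_Algebras" "HOL-Library.Product_Plus"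
begin

text \<open>
  The algebra is realised by weighted shift operators. A lattice point \<open>l \<in> \<int>\<^sup>n\<close> gives a
  point of Spec R (\<open>u\<^sub>j \<mapsto> l\<^sub>j\<close>, reduced mod 2 for idempotent \<open>u\<^sub>j\<close>), on which \<open>\<sigma>\<^sub>i\<close> acts as
  translation by the \<open>i\<close>-th column of \<open>\<gamma>\<close>. On functions of \<open>(l, z) \<in> \<int>\<^sup>n \<times> \<int>\<^sup>m\<close>, \<open>X\<^sub>i\<close> acts
  as a shift weighted by a square root of \<open>t\<^sub>i\<close>, times a sign depending on \<open>z\<close> that produces
  \<open>\<mu>\<^sub>i\<^sub>j\<close>; conditions (i) and (ii) are exactly what makes \<open>X\<^sub>i Y\<^sub>j = \<mu>\<^sub>i\<^sub>j Y\<^sub>j X\<^sub>i\<close> hold.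
  So the defining relations lie in the kernel \<open>K\<close> of this representation. \<open>K\<close> is graded, and
  its degree-zero part lies in the relation ideal: a degree-zero word reduces to a scalar
  modulo the relations, and a scalar vanishing at all points of Spec R lies in the ideal
  generated by the \<open>u\<^sub>j\<^sup>2 - u\<^sub>j\<close>. Hence \<open>K\<close> is contained in the ideal defining the
  algebra. Finally, a homogeneous \<open>a\<close> acts as multiplication by a function \<open>k\<close> followed by a
  fixed shift, and \<open>a\<^sup>*\<close> as the inverse shift followed by multiplication by the same \<open>k\<close>;
  so \<open>a\<^sup>*a\<close> acts as multiplication by \<open>k\<^sup>2\<close>, and \<open>a\<^sup>*a = 0\<close> forces \<open>k = 0\<close>, i.e. \<open>a \<in> K\<close>.
\<close>

definition lin_ext :: "('a \<Rightarrow> 'b::zero \<Rightarrow> 'c::comm_monoid_add) \<Rightarrow> ('a \<Rightarrow>\<^sub>0 'b) \<Rightarrow> 'c" where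
  "lin_ext F p = (\<Sum>k\<in>Poly_Mapping.keys p. F k (Poly_Mapping.lookup p k))"

lemma lin_ext_superset:
  assumes "finite K" "Poly_Mapping.keys p \<subseteq> K" "\<And>k. F k 0 = 0"
  shows "lin_ext F p = (\<Sum>k\<in>K. F k (Poly_Mapping.lookup p k))"
  unfolding lin_ext_def
  by (rule sum.mono_neutral_left) (use assms in \<open>auto simp: in_keys_iff\<close>)

lemma lin_ext_zero [simp]: "lin_ext F 0 = 0"
  by (simp add: lin_ext_def)

lemma lin_ext_single:
  assumes "\<And>k. F k 0 = 0"
  shows "lin_ext F (Poly_Mapping.single k c) = F k c"
  using assms by (cases "c = 0") (auto simp: lin_ext_def)

lemma lin_ext_add:
  fixes F :: "'a \<Rightarrow> 'b::comm_monoid_add \<Rightarrow> 'c::comm_monoid_add"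
  assumes "\<And>k. F k 0 = 0" "\<And>k x y. F k (x + y) = F k x + F k y"
  shows "lin_ext F (p + q) = lin_ext F p + lin_ext F q"
proof -
  let ?K = "Poly_Mapping.keys p \<union> Poly_Mapping.keys q"
  have "lin_ext F (p + q) = (\<Sum>k\<in>?K. F k (Poly_Mapping.lookup (p+q) k))"
    using keys_add[of p q] assms by (intro lin_ext_superset) auto
  also have "\<dots> = (\<Sum>k\<in>?K. F k (Poly_Mapping.lookup p k)) + (\<Sum>k\<in>?K. F k (Poly_Mapping.lookup q k))"
    by (simp add: lookup_add assms sum.distrib)
  also have "\<dots> = lin_ext F p + lin_ext F q"
    using assms by (simp add: lin_ext_superset[of ?K p F] lin_ext_superset[of ?K q F])
  finally show ?thesis .
qed

lemma lin_ext_sum: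
  fixes F :: "'a \<Rightarrow> 'b::comm_monoid_add \<Rightarrow> 'c::comm_monoid_add"
  assumes "\<And>k. F k 0 = 0" "\<And>k x y. F k (x + y) = F k x + F k y"
  shows "lin_ext F (\<Sum>i\<in>I. p i) = (\<Sum>i\<in>I. lin_ext F (p i))"
  by (induction I rule: infinite_finite_induct) (auto simp: lin_ext_add[OF assms])

lemma lin_ext_uminus:
  fixes F :: "'a \<Rightarrow> 'b::ab_group_add \<Rightarrow> 'c::ab_group_add"
  assumes "\<And>k. F k 0 = 0" "\<And>k x y. F k (x + y) = F k x + F k y"
  shows "lin_ext F (- p) = - lin_ext F p"
proof -
  have "lin_ext F (- p + p) = lin_ext F (-p) + lin_ext F p" by (rule lin_ext_add[OF assms])
  then show ?thesis by (simp add: eq_neg_iff_add_eq_0)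
qed

lemma lin_ext_diff:
  fixes F :: "'a \<Rightarrow> 'b::ab_group_add \<Rightarrow> 'c::ab_group_add"
  assumes "\<And>k. F k 0 = 0" "\<And>k x y. F k (x + y) = F k x + F k y"
  shows "lin_ext F (p - q) = lin_ext F p - lin_ext F q"
proof -
  have "lin_ext F (p + - q) = lin_ext F p + lin_ext F (-q)" by (rule lin_ext_add[OF assms])
  moreover have "lin_ext F (- q) = - lin_ext F q" by (rule lin_ext_uminus[OF assms])
  ultimately show ?thesis by simp
qed

lemma poly_mapping_sum_single:
  "p = (\<Sum>k\<in>Poly_Mapping.keys p. Poly_Mapping.single k (Poly_Mapping.lookup p k))"
  by (rule poly_mapping_eqI)
     (auto simp: lookup_sum lookup_single when_def in_keys_iff sum.delta' split: if_splits)

lemma poly_mapping_induct [case_names zero single add]: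
  fixes P :: "('a \<Rightarrow>\<^sub>0 'b::comm_monoid_add) \<Rightarrow> bool"
  assumes "P 0" "\<And>k c. P (Poly_Mapping.single k c)" "\<And>p q. P p \<Longrightarrow> P q \<Longrightarrow> P (p + q)"
  shows "P p"
proof -
  have "\<And>K. finite K \<Longrightarrow> P (\<Sum>k\<in>K. Poly_Mapping.single k (Poly_Mapping.lookup p k))"
  proof -
    fix K :: "'a set" assume "finite K"
    then show "P (\<Sum>k\<in>K. Poly_Mapping.single k (Poly_Mapping.lookup p k))"
      by (induction K rule: finite_induct) (auto intro: assms)
  qed
  then show ?thesis using poly_mapping_sum_single[of p] by (metis finite_keys)
qed

definition mon_eval :: "(nat \<Rightarrow> 'k::comm_ring_1) \<Rightarrow> (nat \<Rightarrow>\<^sub>0 nat) \<Rightarrow> 'k" where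
  "mon_eval P mon = (\<Prod>v\<in>Poly_Mapping.keys mon. P v ^ Poly_Mapping.lookup mon v)"

definition peval :: "(nat \<Rightarrow> 'k::comm_ring_1) \<Rightarrow> 'k pol \<Rightarrow> 'k" where
  "peval P r = lin_ext (\<lambda>mon c. c * mon_eval P mon) r"

lemma mon_eval_superset:
  assumes "finite K" "Poly_Mapping.keys mon \<subseteq> K"
  shows "mon_eval P mon = (\<Prod>v\<in>K. P v ^ Poly_Mapping.lookup mon v)"
  unfolding mon_eval_def
  by (rule prod.mono_neutral_left) (use assms in \<open>auto simp: in_keys_iff\<close>)

lemma mon_eval_add: "mon_eval P (a + b) = mon_eval P a * mon_eval P b"
proof -
  let ?K = "Poly_Mapping.keys a \<union> Poly_Mapping.keys b"
  have "mon_eval P (a + b) = (\<Prod>v\<in>?K. P v ^ Poly_Mapping.lookup (a+b) v)"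
    using keys_add[of a b] by (intro mon_eval_superset) auto
  also have "\<dots> = (\<Prod>v\<in>?K. P v ^ Poly_Mapping.lookup a v) * (\<Prod>v\<in>?K. P v ^ Poly_Mapping.lookup b v)"
    by (simp add: lookup_add power_add prod.distrib)
  also have "\<dots> = mon_eval P a * mon_eval P b"
    by (simp add: mon_eval_superset[of ?K a] mon_eval_superset[of ?K b])
  finally show ?thesis .
qed

lemma mon_eval_zero [simp]: "mon_eval P 0 = 1"
  by (simp add: mon_eval_def)

lemma mon_eval_single [simp]: "mon_eval P (Poly_Mapping.single j e) = P j ^ e"
  by (simp add: mon_eval_def)

lemma peval_add: "peval P (r + s) = peval P r + peval P s"
  unfolding peval_def by (rule lin_ext_add) (auto simp: algebra_simps)

lemma peval_diff: "peval P (r - s) = peval P r - peval P s"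
  unfolding peval_def by (rule lin_ext_diff) (auto simp: algebra_simps)

lemma peval_sum: "peval P (\<Sum>i\<in>I. r i) = (\<Sum>i\<in>I. peval P (r i))"
  unfolding peval_def by (rule lin_ext_sum) (auto simp: algebra_simps)

lemma peval_zero [simp]: "peval P 0 = 0"
  by (simp add: peval_def)

lemma peval_single: "peval P (Poly_Mapping.single mon c) = c * mon_eval P mon"
  unfolding peval_def by (rule lin_ext_single) auto

lemma peval_mult_single: "peval P (Poly_Mapping.single a c * s) = c * mon_eval P a * peval P s"
proof (induction s rule: poly_mapping_induct)
  case zero then show ?case by simp
next
  case (single k d) then show ?case
    by (simp add: mult_single peval_single mon_eval_add)
next
  case (add p q) then show ?case
    by (simp add: distrib_left peval_add algebra_simps)
qed

lemma peval_mult: "peval P (r * s) = peval P r * peval P s"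
proof (induction r rule: poly_mapping_induct)
  case zero then show ?case by simp
next
  case (single k c) then show ?case
    by (simp add: peval_mult_single peval_single)
next
  case (add p q) then show ?case
    by (simp add: distrib_right peval_add algebra_simps)
qed

lemma peval_pc [simp]: "peval P (pc c) = c"
  by (simp add: pc_def peval_single)

lemma peval_one [simp]: "peval P 1 = 1"
  using peval_pc[of P 1] by (simp add: pc_def)

lemma peval_var [simp]: "peval P (var j) = P j"
  by (simp add: var_def peval_single)

lemma peval_of_int [simp]: "peval P (of_int c) = of_int c"
  using peval_pc[of P "of_int c"] by (simp add: pc_def)

lemma peval_of_nat [simp]: "peval P (of_nat c) = of_nat c"
  using peval_pc[of P "of_nat c"] by (simp add: pc_def)

lemma peval_power: "peval P (r ^ e) = peval P r ^ e"
  by (induction e) (simp_all add: peval_mult)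

lemma peval_prod: "peval P (\<Prod>i\<in>I. r i) = (\<Prod>i\<in>I. peval P (r i))"
  by (induction I rule: infinite_finite_induct) (simp_all add: peval_mult)

lemma peval_psubst: "peval P (psubst \<phi> r) = peval (\<lambda>v. peval P (\<phi> v)) r"
proof -
  have "peval P (psubst \<phi> r) = (\<Sum>mon\<in>Poly_Mapping.keys r. Poly_Mapping.lookup r mon *
      (\<Prod>v\<in>Poly_Mapping.keys mon. peval P (\<phi> v) ^ Poly_Mapping.lookup mon v))"
    unfolding psubst_def by (simp add: peval_sum peval_mult peval_prod peval_power)
  then show ?thesis by (simp add: peval_def lin_ext_def mon_eval_def)
qed

lemma peval_cong:
  assumes "\<And>mon v. mon \<in> Poly_Mapping.keys r \<Longrightarrow> v \<in> Poly_Mapping.keys mon \<Longrightarrow> P v = Q v"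
  shows "peval P r = peval Q r"
  unfolding peval_def lin_ext_def mon_eval_def using assms
  by (intro sum.cong refl arg_cong2[where f="(*)"] prod.cong) auto

(* The point of Spec R labelled by l \<in> \<int>^n. *)
definition eval_pt :: "nat \<Rightarrow> int \<Rightarrow> (nat \<Rightarrow> int) \<Rightarrow> nat \<Rightarrow> 'k::comm_ring_1" where
  "eval_pt p pm l j = (if lam p pm j j = -1 then of_int (l j mod 2) else of_int (l j))"

lemma lam_diag_cases: "pm = 1 \<or> pm = -1 \<Longrightarrow> lam p pm j j = 1 \<or> lam p pm j j = -1"
  by (auto simp: lam_def par_def)

lemma mod2_minus1: "((x::int) - 1) mod 2 = 1 - x mod 2"
  by (cases "x mod 2 = 0") (auto simp: mod_diff_eq[symmetric] dest: odd_iff_mod_2_eq_one[THEN iffD2] )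

lemma mod2_plus1: "((x::int) + 1) mod 2 = 1 - x mod 2"
  by (cases "x mod 2 = 0") (auto simp: mod_add_eq[symmetric] dest: odd_iff_mod_2_eq_one[THEN iffD2] )

lemma mod2_plus1': "(1 + (x::int)) mod 2 = 1 - x mod 2"
  using mod2_plus1[of x] by (simp add: add.commute)

lemma peval_tau:
  assumes "pm = 1 \<or> pm = -1"
  shows "peval (eval_pt p pm l) (tau p pm j r) = peval (eval_pt p pm (l(j := l j - 1))) (r :: 'k::comm_ring_1 pol)"
  unfolding tau_def peval_psubst
proof (rule arg_cong[where f="\<lambda>P. peval P r"], rule ext)
  fix v
  show "peval (eval_pt p pm l) (if v = j then of_int (lam p pm j j) * (var j - 1) else var v) =
        (eval_pt p pm (l(j := l j - 1)) v :: 'k)"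
    using lam_diag_cases[OF assms, of p j]
    by (auto simp: peval_mult peval_diff eval_pt_def mod2_minus1 algebra_simps)
qed

lemma peval_tau_inv:
  assumes "pm = 1 \<or> pm = -1"
  shows "peval (eval_pt p pm l) (tau_inv p pm j r) = peval (eval_pt p pm (l(j := l j + 1))) (r :: 'k::comm_ring_1 pol)"
  unfolding tau_inv_def peval_psubst
proof (rule arg_cong[where f="\<lambda>P. peval P r"], rule ext)
  fix v
  show "peval (eval_pt p pm l) (if v = j then of_int (lam p pm j j) * var j + 1 else var v) =
        (eval_pt p pm (l(j := l j + 1)) v :: 'k)"
    using lam_diag_cases[OF assms, of p j]
    by (auto simp: peval_mult peval_add peval_diff eval_pt_def mod2_plus1 mod2_plus1' algebra_simps)
qed

lemma peval_tau_funpow: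
  assumes "pm = 1 \<or> pm = -1"
  shows "peval (eval_pt p pm l) ((tau p pm j ^^ n) r) = peval (eval_pt p pm (l(j := l j - int n))) (r :: 'k::comm_ring_1 pol)"
proof (induction n arbitrary: l)
  case 0 then show ?case by simp
next
  case (Suc n)
  have "peval (eval_pt p pm l) ((tau p pm j ^^ Suc n) r) = peval (eval_pt p pm (l(j := l j - 1))) ((tau p pm j ^^ n) r)"
    by (simp add: peval_tau[OF assms])
  also have "\<dots> = peval (eval_pt p pm ((l(j := l j - 1))(j := (l(j := l j - 1)) j - int n))) r"
    by (rule Suc)
  also have "(l(j := l j - 1))(j := (l(j := l j - 1)) j - int n) = l(j := l j - int (Suc n))"
    by auto
  finally show ?case .
qed

lemma peval_tau_inv_funpow:
  assumes "pm = 1 \<or> pm = -1"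
  shows "peval (eval_pt p pm l) ((tau_inv p pm j ^^ n) r) = peval (eval_pt p pm (l(j := l j + int n))) (r :: 'k::comm_ring_1 pol)"
proof (induction n arbitrary: l)
  case 0 then show ?case by simp
next
  case (Suc n)
  have "peval (eval_pt p pm l) ((tau_inv p pm j ^^ Suc n) r) = peval (eval_pt p pm (l(j := l j + 1))) ((tau_inv p pm j ^^ n) r)"
    by (simp add: peval_tau_inv[OF assms])
  also have "\<dots> = peval (eval_pt p pm ((l(j := l j + 1))(j := (l(j := l j + 1)) j + int n))) r"
    by (rule Suc)
  also have "(l(j := l j + 1))(j := (l(j := l j + 1)) j + int n) = l(j := l j + int (Suc n))"
    by auto
  finally show ?case .
qed

lemma peval_tau_pow:
  assumes "pm = 1 \<or> pm = -1"
  shows "peval (eval_pt p pm l) (tau_pow p pm j k r) = peval (eval_pt p pm (l(j := l j - k))) (r :: 'k::comm_ring_1 pol)"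
  by (simp add: tau_pow_def peval_tau_funpow[OF assms] peval_tau_inv_funpow[OF assms])

lemma peval_foldr_tau:
  assumes "pm = 1 \<or> pm = -1" "distinct L"
  shows "peval (eval_pt p pm l) (foldr (\<lambda>j f. tau_pow p pm j (c j) \<circ> f) L id r)
       = peval (eval_pt p pm (\<lambda>v. if v \<in> set L then l v - c v else l v)) (r :: 'k::comm_ring_1 pol)"
  using assms(2)
proof (induction L arbitrary: l)
  case Nil then show ?case by simp
next
  case (Cons j L)
  have "peval (eval_pt p pm l) (foldr (\<lambda>j f. tau_pow p pm j (c j) \<circ> f) (j # L) id r)
      = peval (eval_pt p pm (l(j := l j - c j))) (foldr (\<lambda>j f. tau_pow p pm j (c j) \<circ> f) L id r)"
    by (simp add: peval_tau_pow[OF assms(1)])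
  also have "\<dots> = peval (eval_pt p pm (\<lambda>v. if v \<in> set L then (l(j := l j - c j)) v - c v else (l(j := l j - c j)) v)) r"
    using Cons.IH[of "l(j := l j - c j)"] Cons.prems by (simp add: o_def id_def fun_upd_def)
  also have "(\<lambda>v. if v \<in> set L then (l(j := l j - c j)) v - c v else (l(j := l j - c j)) v)
      = (\<lambda>v. if v \<in> set (j # L) then l v - c v else l v)"
    using Cons.prems by auto
  finally show ?case .
qed

definition gamma_col :: "nat \<Rightarrow> (nat \<Rightarrow> nat \<Rightarrow> int) \<Rightarrow> nat \<Rightarrow> nat \<Rightarrow> int" where
  "gamma_col n \<gamma> i = (\<lambda>v. if v \<in> {1..n} then \<gamma> v i else 0)"

lemma peval_sigma:
  assumes "pm = 1 \<or> pm = -1"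
  shows "peval (eval_pt p pm l) (sigma p q pm \<gamma> i r) = peval (eval_pt p pm (l - gamma_col (p+q) \<gamma> i)) (r :: 'k::comm_ring_1 pol)"
proof -
  have "(\<lambda>v. if v \<in> set [1..<p+q+1] then l v - \<gamma> v i else l v) = l - gamma_col (p+q) \<gamma> i"
    by (auto simp: gamma_col_def fun_eq_iff)
  then show ?thesis
    unfolding sigma_def using peval_foldr_tau[OF assms, where L="[1..<p+q+1]" and l=l and c="\<lambda>j. \<gamma> j i" and r=r] by simp
qed

lemma peval_sigma_inv:
  assumes "pm = 1 \<or> pm = -1"
  shows "peval (eval_pt p pm l) (sigma_inv p q pm \<gamma> i r) = peval (eval_pt p pm (l + gamma_col (p+q) \<gamma> i)) (r :: 'k::comm_ring_1 pol)"
proof -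
  have "(\<lambda>v. if v \<in> set [1..<p+q+1] then l v - - \<gamma> v i else l v) = l + gamma_col (p+q) \<gamma> i"
    by (auto simp: gamma_col_def fun_eq_iff)
  then show ?thesis
    unfolding sigma_inv_def using peval_foldr_tau[OF assms, where L="[1..<p+q+1]" and l=l and c="\<lambda>j. - \<gamma> j i" and r=r] by simp
qed

section \<open>The weighted shift representation\<close>

(* A state (l, z) consists of a point l of Spec R and a multidegree z \<in> \<int>^m. *)
type_synonym state = "(nat \<Rightarrow> int) \<times> (nat \<Rightarrow> int)"

definition sym_shift :: "nat \<Rightarrow> (nat \<Rightarrow> nat \<Rightarrow> int) \<Rightarrow> gsym \<Rightarrow> state" where
  "sym_shift n \<gamma> x = (case x of GX i \<Rightarrow> (gamma_col n \<gamma> i, \<lambda>k. if k = i then 1 else 0)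
                          | GY i \<Rightarrow> - (gamma_col n \<gamma> i, \<lambda>k. if k = i then 1 else 0))"

definition word_shift :: "nat \<Rightarrow> (nat \<Rightarrow> nat \<Rightarrow> int) \<Rightarrow> gsym list \<Rightarrow> state" where
  "word_shift n \<gamma> w = sum_list (map (sym_shift n \<gamma>) w)"

lemma word_shift_Nil [simp]: "word_shift n \<gamma> [] = 0" by (simp add: word_shift_def)
lemma word_shift_Cons [simp]: "word_shift n \<gamma> (x # w) = sym_shift n \<gamma> x + word_shift n \<gamma> w" by (simp add: word_shift_def)
lemma word_shift_append [simp]: "word_shift n \<gamma> (w @ v) = word_shift n \<gamma> w + word_shift n \<gamma> v" by (simp add: word_shift_def)

definition eval_state :: "nat \<Rightarrow> int \<Rightarrow> state \<Rightarrow> 'k::comm_ring_1 pol \<Rightarrow> 'k" where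
  "eval_state p pm s r = peval (eval_pt p pm (fst s)) r"

lemma eval_state_ssig:
  assumes "pm = 1 \<or> pm = -1"
  shows "eval_state p pm s (ssig p q pm \<gamma> x r) = eval_state p pm (s - sym_shift (p+q) \<gamma> x) r"
  by (cases x) (simp_all add: eval_state_def sym_shift_def peval_sigma[OF assms] peval_sigma_inv[OF assms])

lemma eval_state_sigw:
  assumes "pm = 1 \<or> pm = -1"
  shows "eval_state p pm s (sigw p q pm \<gamma> w r) = eval_state p pm (s - word_shift (p+q) \<gamma> w) r"
  by (induction w arbitrary: s) (simp_all add: eval_state_ssig[OF assms] algebra_simps)

(* Y_i carries the weight of X_i at the state it leads to, so that Y_i X_i acts by a square. *)
fun word_weight :: "(nat \<Rightarrow> state \<Rightarrow> 'k::comm_ring_1) \<Rightarrow> nat \<Rightarrow> (nat \<Rightarrow> nat \<Rightarrow> int) \<Rightarrow> gsym list \<Rightarrow> state \<Rightarrow> 'k" where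
  "word_weight \<alpha> n \<gamma> [] s = 1"
| "word_weight \<alpha> n \<gamma> (GX i # w) s = \<alpha> i s * word_weight \<alpha> n \<gamma> w (s - sym_shift n \<gamma> (GX i))"
| "word_weight \<alpha> n \<gamma> (GY i # w) s = \<alpha> i (s - sym_shift n \<gamma> (GY i)) * word_weight \<alpha> n \<gamma> w (s - sym_shift n \<gamma> (GY i))"

lemma word_weight_Cons: "word_weight \<alpha> n \<gamma> (x # w) s = word_weight \<alpha> n \<gamma> [x] s * word_weight \<alpha> n \<gamma> w (s - sym_shift n \<gamma> x)"
  by (cases x) simp_all

lemma word_weight_append: "word_weight \<alpha> n \<gamma> (w @ v) s = word_weight \<alpha> n \<gamma> w s * word_weight \<alpha> n \<gamma> v (s - word_shift n \<gamma> w)"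
proof (induction w arbitrary: s)
  case Nil then show ?case by simp
next
  case (Cons x w)
  have "word_weight \<alpha> n \<gamma> (x # (w @ v)) s = word_weight \<alpha> n \<gamma> [x] s * word_weight \<alpha> n \<gamma> (w @ v) (s - sym_shift n \<gamma> x)"
    by (rule word_weight_Cons)
  also have "\<dots> = word_weight \<alpha> n \<gamma> [x] s * (word_weight \<alpha> n \<gamma> w (s - sym_shift n \<gamma> x) * word_weight \<alpha> n \<gamma> v (s - sym_shift n \<gamma> x - word_shift n \<gamma> w))"
    using Cons by simp
  also have "\<dots> = word_weight \<alpha> n \<gamma> (x # w) s * word_weight \<alpha> n \<gamma> v (s - word_shift n \<gamma> (x # w))"
    by (subst word_weight_Cons[of _ _ _ x w]) (simp add: algebra_simps)
  finally show ?case by simp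
qed

definition rep :: "nat \<Rightarrow> int \<Rightarrow> (nat \<Rightarrow> state \<Rightarrow> 'k::comm_ring_1) \<Rightarrow> nat \<Rightarrow> (nat \<Rightarrow> nat \<Rightarrow> int)
     \<Rightarrow> 'k tgw \<Rightarrow> (state \<Rightarrow> 'k) \<Rightarrow> state \<Rightarrow> 'k" where
  "rep p pm \<alpha> n \<gamma> x f s = lin_ext (\<lambda>w c. eval_state p pm s c * word_weight \<alpha> n \<gamma> w s * f (s - word_shift n \<gamma> w)) x"

lemma rep_diff: "rep p pm \<alpha> n \<gamma> (x - y) f s = rep p pm \<alpha> n \<gamma> x f s - rep p pm \<alpha> n \<gamma> y f s"
  unfolding rep_def by (rule lin_ext_diff) (auto simp: eval_state_def peval_add algebra_simps)

lemma rep_sum: "rep p pm \<alpha> n \<gamma> (\<Sum>i\<in>I. x i) f s = (\<Sum>i\<in>I. rep p pm \<alpha> n \<gamma> (x i) f s)"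
  unfolding rep_def by (rule lin_ext_sum) (auto simp: eval_state_def peval_add algebra_simps)

lemma rep_zero [simp]: "rep p pm \<alpha> n \<gamma> 0 f s = 0"
  by (simp add: rep_def)

lemma rep_single: "rep p pm \<alpha> n \<gamma> (Poly_Mapping.single w c) f s = eval_state p pm s c * word_weight \<alpha> n \<gamma> w s * f (s - word_shift n \<gamma> w)"
  unfolding rep_def by (rule lin_ext_single) (auto simp: eval_state_def)

lemma rep_gmult:
  assumes "pm = 1 \<or> pm = -1"
  shows "rep p pm \<alpha> (p+q) \<gamma> (gmult p q pm \<gamma> x y) f s = rep p pm \<alpha> (p+q) \<gamma> x (rep p pm \<alpha> (p+q) \<gamma> y f) s"
proof -
  let ?n = "p+q"
  have "rep p pm \<alpha> ?n \<gamma> (gmult p q pm \<gamma> x y) f s =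
     (\<Sum>w\<in>Poly_Mapping.keys x. \<Sum>v\<in>Poly_Mapping.keys y.
        eval_state p pm s (Poly_Mapping.lookup x w) * word_weight \<alpha> ?n \<gamma> w s *
        (eval_state p pm (s - word_shift ?n \<gamma> w) (Poly_Mapping.lookup y v) * word_weight \<alpha> ?n \<gamma> v (s - word_shift ?n \<gamma> w)
          * f (s - word_shift ?n \<gamma> w - word_shift ?n \<gamma> v)))"
    unfolding gmult_def rep_sum rep_single
    by (intro sum.cong refl)
       (simp add: eval_state_def peval_mult word_weight_append eval_state_sigw[OF assms, unfolded eval_state_def] algebra_simps)
  also have "\<dots> = rep p pm \<alpha> ?n \<gamma> x (rep p pm \<alpha> ?n \<gamma> y f) s"
    by (simp add: rep_def lin_ext_def sum_distrib_left algebra_simps)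
  finally show ?thesis .
qed

definition sqrt_of :: "'k::alg_closed_field \<Rightarrow> 'k" where
  "sqrt_of y = (SOME r. r ^ 2 = y)"

lemma sqrt_of_square: "sqrt_of y ^ 2 = (y::'k::alg_closed_field)"
  unfolding sqrt_of_def by (rule someI_ex) (rule nth_root_exists, simp)

lemma sqrt_of_zero [simp]: "sqrt_of (0::'k::alg_closed_field) = 0"
  using sqrt_of_square[of "0::'k"] by simp

definition par_sign :: "int \<Rightarrow> 'k::comm_ring_1" where
  "par_sign x = (-1) ^ nat (x mod 2)"

lemma par_sign_add: "par_sign (x + y) = (par_sign x * par_sign y :: 'k::comm_ring_1)"
proof -
  have "x mod 2 = 0 \<or> x mod 2 = 1" "y mod 2 = 0 \<or> y mod 2 = 1" by auto
  moreover have "(x + y) mod 2 = (x mod 2 + y mod 2) mod 2" by (simp add: mod_add_eq)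
  ultimately show ?thesis unfolding par_sign_def by auto
qed

lemma par_sign_sq: "par_sign x * par_sign x = (1::'k::comm_ring_1)"
proof -
  have "x mod 2 = 0 \<or> x mod 2 = 1" by auto
  then show ?thesis unfolding par_sign_def by auto
qed

lemma par_sign_uminus: "par_sign (- x) = (par_sign x :: 'k::comm_ring_1)"
proof -
  have "x mod 2 = 0 \<or> x mod 2 = 1" by auto
  moreover have "(- x) mod 2 = (- (x mod 2)) mod 2" by (simp add: mod_minus_eq)
  ultimately show ?thesis unfolding par_sign_def by auto
qed

definition coord_val :: "nat \<Rightarrow> int \<Rightarrow> nat \<Rightarrow> int \<Rightarrow> 'k::comm_ring_1" where
  "coord_val p pm k y = (if lam p pm k k = -1 then of_int (y mod 2) else of_int y)"

lemma eval_pt_coord: "eval_pt p pm l k = coord_val p pm k (l k)"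
  by (simp add: eval_pt_def coord_val_def)

(* A square root of the factor u_ji of t_i at u_j = y (c = \<gamma>_ji), taken factor by factor so
   that these roots telescope (sqrt_prod_concat). *)
definition sqrt_uji :: "nat \<Rightarrow> int \<Rightarrow> nat \<Rightarrow> int \<Rightarrow> int \<Rightarrow> 'k::alg_closed_field" where
  "sqrt_uji p pm k c y = (if c > 0 then (\<Prod>l\<in>{0..<nat c}. sqrt_of (coord_val p pm k y + of_nat l))
                   else if c < 0 then (\<Prod>l\<in>{1..nat (- c)}. sqrt_of (coord_val p pm k y - of_nat l))
                   else 1)"

lemma sqrt_uji_square:
  "sqrt_uji p pm k (\<gamma> k i) (l k) ^ 2 = peval (eval_pt p pm l) (uji \<gamma> k i :: 'k::alg_closed_field pol)"
  by (simp add: sqrt_uji_def uji_def peval_prod peval_add peval_diff eval_pt_coord prod_power_distrib sqrt_of_square)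

definition sqrt_prod :: "int \<Rightarrow> int \<Rightarrow> 'k::alg_closed_field" where
  "sqrt_prod a b = (\<Prod>t\<in>{a..<b}. sqrt_of (of_int t))"

lemma sqrt_prod_concat: "a \<le> b \<Longrightarrow> b \<le> c \<Longrightarrow> sqrt_prod a b * sqrt_prod b c = (sqrt_prod a c :: 'k::alg_closed_field)"
  unfolding sqrt_prod_def by (subst prod.union_disjoint[symmetric]) (auto simp: ivl_disj_un)

lemma sqrt_uji_pos:
  assumes "lam p pm k k \<noteq> -1" "c \<ge> 0"
  shows "sqrt_uji p pm k c y = (sqrt_prod y (y + c) :: 'k::alg_closed_field)"
proof (cases "c = 0")
  case True then show ?thesis by (simp add: sqrt_uji_def sqrt_prod_def)
next
  case False
  have "sqrt_uji p pm k c y = (\<Prod>l\<in>{0..<nat c}. sqrt_of (of_int (int l + y)) :: 'k)"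
    using assms False by (simp add: sqrt_uji_def coord_val_def add.commute)
  also have "\<dots> = (\<Prod>t\<in>(\<lambda>l. int l + y) ` {0..<nat c}. sqrt_of (of_int t))"
    by (subst prod.reindex) (auto simp: inj_on_def)
  also have "(\<lambda>l. int l + y) ` {0..<nat c} = {y..<y+c}"
  proof -
    have "(\<lambda>l. int l + y) ` {0..<nat c} = (\<lambda>x. x + y) ` (int ` {0..<nat c})"
      by (simp add: image_image)
    also have "int ` {0..<nat c} = {0..<c}" using assms by (simp add: image_int_atLeastLessThan)
    also have "(\<lambda>x. x + y) ` {0..<c} = {y..<y+c}"
      using image_add_int_atLeastLessThan[of "y+c" y] by (simp add: add.commute)
    finally show ?thesis .
  qed
  finally show ?thesis by (simp add: sqrt_prod_def)
qed

lemma sqrt_uji_neg: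
  assumes "lam p pm k k \<noteq> -1" "c < 0"
  shows "sqrt_uji p pm k c y = (sqrt_prod (y + c) y :: 'k::alg_closed_field)"
proof -
  have "sqrt_uji p pm k c y = (\<Prod>l\<in>{1..nat (-c)}. sqrt_of (of_int (y - int l)) :: 'k)"
    using assms by (simp add: sqrt_uji_def coord_val_def)
  also have "\<dots> = (\<Prod>t\<in>(\<lambda>l. y - int l) ` {1..nat (-c)}. sqrt_of (of_int t))"
    by (subst prod.reindex) (auto simp: inj_on_def)
  also have "(\<lambda>l. y - int l) ` {1..nat (-c)} = {y+c..<y}"
  proof (rule set_eqI, rule iffI)
    fix t assume "t \<in> (\<lambda>l. y - int l) ` {1..nat (-c)}"
    then show "t \<in> {y+c..<y}" using assms by auto
  next
    fix t assume t: "t \<in> {y+c..<y}"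
    then have "t = y - int (nat (y - t))" "nat (y - t) \<in> {1..nat (-c)}" by auto
    then show "t \<in> (\<lambda>l. y - int l) ` {1..nat (-c)}" by blast
  qed
  finally show ?thesis by (simp add: sqrt_prod_def)
qed

lemma sqrt_uji_zero [simp]: "sqrt_uji p pm k 0 y = 1"
  by (simp add: sqrt_uji_def)

(* For a * b < 0 both sides are the product of sqrt_of over the same integer interval. *)
lemma sqrt_uji_comm_nonbool:
  assumes "lam p pm k k \<noteq> -1" "a * b \<le> 0"
  shows "sqrt_uji p pm k a (x - a) * sqrt_uji p pm k b (x - a) = (sqrt_uji p pm k b x * sqrt_uji p pm k a (x + b - a) :: 'k::alg_closed_field)"
proof -
  consider "a = 0" | "b = 0" | "a > 0" "b < 0" | "a < 0" "b > 0"
    using assms(2) by (metis linorder_neqE_linordered_idom mult_pos_pos mult_neg_neg not_le)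
  then show ?thesis
  proof cases
    case 1 then show ?thesis by simp
  next
    case 2 then show ?thesis by simp
  next
    case 3
    have "sqrt_uji p pm k a (x - a) * sqrt_uji p pm k b (x - a) = (sqrt_prod (x - a) x * sqrt_prod (x - a + b) (x - a) :: 'k)"
      using 3 assms by (simp add: sqrt_uji_pos sqrt_uji_neg)
    also have "\<dots> = sqrt_prod (x - a + b) x" using 3 sqrt_prod_concat[of "x-a+b" "x-a" x] by (simp add: mult.commute)
    also have "\<dots> = sqrt_prod (x + b - a) (x + b) * sqrt_prod (x + b) x"
    proof -
      have "x - a + b = x + b - a" by simp
      moreover have "sqrt_prod (x + b - a) (x + b) * sqrt_prod (x + b) x = (sqrt_prod (x + b - a) x :: 'k)"
        using 3 by (intro sqrt_prod_concat) auto
      ultimately show ?thesis by metis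
    qed
    also have "\<dots> = sqrt_prod (x + b) x * sqrt_prod (x + b - a) (x + b)" by (simp add: mult.commute)
    also have "\<dots> = sqrt_uji p pm k b x * sqrt_uji p pm k a (x + b - a)"
      using 3 assms by (simp add: sqrt_uji_pos sqrt_uji_neg)
    finally show ?thesis .
  next
    case 4
    have "sqrt_uji p pm k a (x - a) * sqrt_uji p pm k b (x - a) = (sqrt_prod (x - a + a) (x - a) * sqrt_prod (x - a) (x - a + b) :: 'k)"
      using 4 assms by (simp add: sqrt_uji_pos sqrt_uji_neg)
    also have "\<dots> = sqrt_prod x (x - a + b)" using 4 sqrt_prod_concat[of x "x-a" "x-a+b"] by simp
    also have "\<dots> = sqrt_prod x (x + b) * sqrt_prod (x + b) (x + b - a)"
    proof -
      have "x - a + b = x + b - a" by simp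
      moreover have "sqrt_prod x (x + b) * sqrt_prod (x + b) (x + b - a) = (sqrt_prod x (x + b - a) :: 'k)"
        using 4 by (intro sqrt_prod_concat) auto
      ultimately show ?thesis by metis
    qed
    also have "\<dots> = sqrt_uji p pm k b x * sqrt_uji p pm k a (x + b - a)"
      using 4 assms by (simp add: sqrt_uji_pos sqrt_uji_neg)
    finally show ?thesis .
  qed
qed

lemma coord_val_mod2: "lam p pm k k = -1 \<Longrightarrow> y mod 2 = y' mod 2 \<Longrightarrow> coord_val p pm k y = coord_val p pm k y'"
  by (simp add: coord_val_def)

lemma sqrt_uji_bool_1: "lam p pm k k = -1 \<Longrightarrow> sqrt_uji p pm k 1 y = sqrt_of (coord_val p pm k y)"
  by (simp add: sqrt_uji_def)

lemma sqrt_uji_bool_m1: "lam p pm k k = -1 \<Longrightarrow> sqrt_uji p pm k (-1) y = sqrt_of (coord_val p pm k y - 1)"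
  by (simp add: sqrt_uji_def)

lemma sqrt_uji_bool_prod:
  assumes "lam p pm k k = -1"
  shows "sqrt_uji p pm k 1 y * sqrt_uji p pm k (-1) y = (0 :: 'k::{alg_closed_field})"
proof -
  have "y mod 2 = 0 \<or> y mod 2 = 1" by auto
  then show ?thesis using assms by (auto simp: sqrt_uji_bool_1 sqrt_uji_bool_m1 coord_val_def)
qed

lemma sqrt_uji_bool_opposite:
  assumes "lam p pm k k = -1" "a * b < 0" "\<bar>a\<bar> \<le> 1" "\<bar>b\<bar> \<le> 1"
  shows "sqrt_uji p pm k a (x - a) * sqrt_uji p pm k b (x - a) = (0 :: 'k::alg_closed_field)"
    and "sqrt_uji p pm k b x * sqrt_uji p pm k a (x + b - a) = (0 :: 'k::alg_closed_field)"
proof -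
  have ab: "(a = 1 \<and> b = -1) \<or> (a = -1 \<and> b = 1)"
    using assms(2-4) by (auto simp: abs_le_iff mult_less_0_iff)
  have e1: "sqrt_uji p pm k c (y + 2) = (sqrt_uji p pm k c y :: 'k)" for c y
  proof -
    have "coord_val p pm k (y+2) = (coord_val p pm k y :: 'k)" by (rule coord_val_mod2[OF assms(1)]) simp
    then show ?thesis by (simp add: sqrt_uji_def)
  qed
  show "sqrt_uji p pm k a (x - a) * sqrt_uji p pm k b (x - a) = (0 :: 'k)"
    using ab sqrt_uji_bool_prod[OF assms(1)] by (auto simp: mult.commute)
  from ab show "sqrt_uji p pm k b x * sqrt_uji p pm k a (x + b - a) = (0 :: 'k)"
  proof
    assume h: "a = 1 \<and> b = -1"
    have "sqrt_uji p pm k 1 (x - 2) = (sqrt_uji p pm k 1 x :: 'k)" using e1[of 1 "x - 2"] by simp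
    then show ?thesis using h sqrt_uji_bool_prod[OF assms(1), of x] by (simp add: mult.commute)
  next
    assume h: "a = -1 \<and> b = 1"
    have "sqrt_uji p pm k (-1) (x + 2) = (sqrt_uji p pm k (-1) x :: 'k)" using e1[of "-1" x] by simp
    then show ?thesis using h sqrt_uji_bool_prod[OF assms(1), of x] by (simp add: add.commute)
  qed
qed

lemma sqrt_uji_comm_bool:
  assumes "lam p pm k k = -1" "a * b \<le> 0" "\<bar>a\<bar> \<le> 1" "\<bar>b\<bar> \<le> 1"
  shows "sqrt_uji p pm k a (x - a) * sqrt_uji p pm k b (x - a) = (sqrt_uji p pm k b x * sqrt_uji p pm k a (x + b - a) :: 'k::alg_closed_field)"
proof (cases "a * b = 0")
  case True then show ?thesis by auto
next
  case False
  have "a * b < 0" using assms(2) False by linarith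
  have "sqrt_uji p pm k a (x - a) * sqrt_uji p pm k b (x - a) = (0 :: 'k)"
    by (rule sqrt_uji_bool_opposite(1)[OF assms(1) \<open>a * b < 0\<close> assms(3,4)])
  moreover have "sqrt_uji p pm k b x * sqrt_uji p pm k a (x + b - a) = (0 :: 'k)"
    by (rule sqrt_uji_bool_opposite(2)[OF assms(1) \<open>a * b < 0\<close> assms(3,4)])
  ultimately show ?thesis by metis
qed

lemma par_sign_diff: "par_sign (x - y) = (par_sign x * par_sign y :: 'k::comm_ring_1)"
proof -
  have "par_sign (x + - y) = (par_sign x * par_sign (- y) :: 'k)" by (rule par_sign_add)
  then show ?thesis by (simp add: par_sign_uminus)
qed

definition mu_int :: "nat \<Rightarrow> nat \<Rightarrow> int \<Rightarrow> (nat \<Rightarrow> nat \<Rightarrow> int) \<Rightarrow> nat \<Rightarrow> nat \<Rightarrow> int" where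
  "mu_int p q pm \<gamma> i j = (- pm) ^ nat (pprime p q \<gamma> i * pprime p q \<gamma> j)
                        * (-1) ^ nat (pbar p q \<gamma> i * pbar p q \<gamma> j)"

lemma mu_eq_mu_int: "mu p q pm \<gamma> i j = of_int (mu_int p q pm \<gamma> i j)"
  by (simp add: mu_def mu_int_def)

lemma mu_int_sym: "mu_int p q pm \<gamma> i j = mu_int p q pm \<gamma> j i"
  by (simp add: mu_int_def mult.commute)

lemma mu_int_cases: "pm = 1 \<or> pm = -1 \<Longrightarrow> mu_int p q pm \<gamma> i j = 1 \<or> mu_int p q pm \<gamma> i j = -1"
  unfolding mu_int_def by (auto simp: power_minus' minus_one_power_iff)

definition mu_parity :: "nat \<Rightarrow> nat \<Rightarrow> int \<Rightarrow> (nat \<Rightarrow> nat \<Rightarrow> int) \<Rightarrow> nat \<Rightarrow> nat \<Rightarrow> int" where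
  "mu_parity p q pm \<gamma> i j = (if mu_int p q pm \<gamma> i j = 1 then 0 else 1)"

lemma mu_parity_sym: "mu_parity p q pm \<gamma> i j = mu_parity p q pm \<gamma> j i"
  by (simp add: mu_parity_def mu_int_sym)

lemma par_sign_mu_parity: "pm = 1 \<or> pm = -1 \<Longrightarrow> par_sign (mu_parity p q pm \<gamma> i j) = (of_int (mu_int p q pm \<gamma> i j) :: 'k::comm_ring_1)"
  using mu_int_cases[of pm p q \<gamma> i j] by (auto simp: mu_parity_def par_sign_def)

(* The sign of the weight of X_i records the parity of the X_i' (i' < i) with \<mu>_ii' = -1
   applied so far; this produces the factor \<mu>_ij when X_i and Y_j are swapped. *)
definition sign_exp :: "nat \<Rightarrow> nat \<Rightarrow> int \<Rightarrow> (nat \<Rightarrow> nat \<Rightarrow> int) \<Rightarrow> nat \<Rightarrow> (nat \<Rightarrow> int) \<Rightarrow> int" where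
  "sign_exp p q pm \<gamma> i z = (\<Sum>i'\<in>{1..<i}. mu_parity p q pm \<gamma> i i' * z i')"

lemma sign_exp_add: "sign_exp p q pm \<gamma> i (z + w) = sign_exp p q pm \<gamma> i z + sign_exp p q pm \<gamma> i w"
  by (simp add: sign_exp_def sum.distrib algebra_simps)

lemma sign_exp_uminus: "sign_exp p q pm \<gamma> i (- z) = - sign_exp p q pm \<gamma> i z"
  by (simp add: sign_exp_def sum_negf)

lemma sign_exp_diff: "sign_exp p q pm \<gamma> i (z - w) = sign_exp p q pm \<gamma> i z - sign_exp p q pm \<gamma> i w"
  using sign_exp_add[of p q pm \<gamma> i z "- w"] sign_exp_uminus[of p q pm \<gamma> i w] by simp

lemma sign_exp_unit: "sign_exp p q pm \<gamma> i (\<lambda>k. if k = j then 1 else 0) = (if j \<in> {1..<i} then mu_parity p q pm \<gamma> i j else 0)"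
  by (auto simp: sign_exp_def if_distrib cong: if_cong)

definition gen_weight :: "nat \<Rightarrow> nat \<Rightarrow> int \<Rightarrow> (nat \<Rightarrow> nat \<Rightarrow> int) \<Rightarrow> nat \<Rightarrow> state \<Rightarrow> 'k::alg_closed_field" where
  "gen_weight p q pm \<gamma> i s = par_sign (sign_exp p q pm \<gamma> i (snd s)) *
      (\<Prod>k\<in>{1..p+q}. sqrt_uji p pm k (\<gamma> k i) (fst s k - \<gamma> k i))"

lemma sym_shift_GX: "sym_shift n \<gamma> (GX i) = (gamma_col n \<gamma> i, \<lambda>k. if k = i then 1 else 0)"
  by (simp add: sym_shift_def)

lemma gen_weight_square:
  "gen_weight p q pm \<gamma> i (s + sym_shift (p+q) \<gamma> (GX i)) ^ 2 = (eval_state p pm s (tt p q \<gamma> i) :: 'k::alg_closed_field)"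
proof -
  have h: "gen_weight p q pm \<gamma> i (s + sym_shift (p+q) \<gamma> (GX i)) =
        par_sign (sign_exp p q pm \<gamma> i (snd s + (\<lambda>k. if k = i then 1 else 0))) *
        (\<Prod>k\<in>{1..p+q}. sqrt_uji p pm k (\<gamma> k i) (fst s k))"
    by (simp add: gen_weight_def sym_shift_GX gamma_col_def)
  have "gen_weight p q pm \<gamma> i (s + sym_shift (p+q) \<gamma> (GX i)) ^ 2 =
        par_sign (sign_exp p q pm \<gamma> i (snd s + (\<lambda>k. if k = i then 1 else 0))) ^ 2 *
        (\<Prod>k\<in>{1..p+q}. sqrt_uji p pm k (\<gamma> k i) (fst s k) ^ 2)"
    unfolding h by (simp add: power_mult_distrib prod_power_distrib)
  also have "\<dots> = (\<Prod>k\<in>{1..p+q}. peval (eval_pt p pm (fst s)) (uji \<gamma> k i))"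
    by (simp add: power2_eq_square[of "par_sign _"] par_sign_sq sqrt_uji_square)
  also have "\<dots> = eval_state p pm s (tt p q \<gamma> i)"
    by (simp add: eval_state_def tt_def peval_prod)
  finally show ?thesis .
qed

lemma gen_weight_XY:
  "gen_weight p q pm \<gamma> i s * gen_weight p q pm \<gamma> j (s - sym_shift (p+q) \<gamma> (GX i) + sym_shift (p+q) \<gamma> (GX j))
   = (par_sign (sign_exp p q pm \<gamma> i (snd s)) *
      par_sign (sign_exp p q pm \<gamma> j (snd s) - (if i \<in> {1..<j} then mu_parity p q pm \<gamma> j i else 0))) *
     (\<Prod>k\<in>{1..p+q}. sqrt_uji p pm k (\<gamma> k i) (fst s k - \<gamma> k i) * sqrt_uji p pm k (\<gamma> k j) (fst s k - \<gamma> k i)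
       :: 'k::alg_closed_field)"
proof -
  obtain x z where s: "s = (x, z)" by (cases s)
  let ?e = "\<lambda>i k. if k = i then 1 else (0::int)"
  have shifted: "s - sym_shift (p+q) \<gamma> (GX i) + sym_shift (p+q) \<gamma> (GX j)
      = (x - gamma_col (p+q) \<gamma> i + gamma_col (p+q) \<gamma> j, z - ?e i + ?e j)"
    by (simp add: s sym_shift_GX)
  have "sign_exp p q pm \<gamma> j (z - ?e i + ?e j)
      = sign_exp p q pm \<gamma> j z - (if i \<in> {1..<j} then mu_parity p q pm \<gamma> j i else 0)"
    by (simp add: sign_exp_add sign_exp_diff sign_exp_unit)
  moreover have "(\<Prod>k\<in>{1..p+q}. sqrt_uji p pm k (\<gamma> k j) ((x - gamma_col (p+q) \<gamma> i + gamma_col (p+q) \<gamma> j) k - \<gamma> k j))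
      = (\<Prod>k\<in>{1..p+q}. sqrt_uji p pm k (\<gamma> k j) (x k - \<gamma> k i) :: 'k)"
    by (rule prod.cong) (auto simp: gamma_col_def)
  ultimately show ?thesis
    unfolding shifted by (simp add: s gen_weight_def prod.distrib mult_ac)
qed

lemma gen_weight_YX:
  "gen_weight p q pm \<gamma> j (s + sym_shift (p+q) \<gamma> (GX j)) * gen_weight p q pm \<gamma> i (s + sym_shift (p+q) \<gamma> (GX j))
   = (par_sign (sign_exp p q pm \<gamma> j (snd s)) *
      par_sign (sign_exp p q pm \<gamma> i (snd s) + (if j \<in> {1..<i} then mu_parity p q pm \<gamma> i j else 0))) *
     (\<Prod>k\<in>{1..p+q}. sqrt_uji p pm k (\<gamma> k j) (fst s k) * sqrt_uji p pm k (\<gamma> k i) (fst s k + \<gamma> k j - \<gamma> k i)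
       :: 'k::alg_closed_field)"
proof -
  obtain x z where s: "s = (x, z)" by (cases s)
  let ?e = "\<lambda>i k. if k = i then 1 else (0::int)"
  have shifted: "s + sym_shift (p+q) \<gamma> (GX j) = (x + gamma_col (p+q) \<gamma> j, z + ?e j)"
    by (simp add: s sym_shift_GX)
  have "sign_exp p q pm \<gamma> j (z + ?e j) = sign_exp p q pm \<gamma> j z"
    "sign_exp p q pm \<gamma> i (z + ?e j) = sign_exp p q pm \<gamma> i z + (if j \<in> {1..<i} then mu_parity p q pm \<gamma> i j else 0)"
    by (simp_all add: sign_exp_add sign_exp_unit)
  moreover have "(\<Prod>k\<in>{1..p+q}. sqrt_uji p pm k (\<gamma> k j) ((x + gamma_col (p+q) \<gamma> j) k - \<gamma> k j))
      = (\<Prod>k\<in>{1..p+q}. sqrt_uji p pm k (\<gamma> k j) (x k) :: 'k)"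
    by (rule prod.cong) (auto simp: gamma_col_def)
  moreover have "(\<Prod>k\<in>{1..p+q}. sqrt_uji p pm k (\<gamma> k i) ((x + gamma_col (p+q) \<gamma> j) k - \<gamma> k i))
      = (\<Prod>k\<in>{1..p+q}. sqrt_uji p pm k (\<gamma> k i) (x k + \<gamma> k j - \<gamma> k i) :: 'k)"
    by (rule prod.cong) (auto simp: gamma_col_def)
  ultimately show ?thesis
    unfolding shifted by (simp add: s gen_weight_def prod.distrib mult_ac)
qed

lemma par_sign_mu_twist:
  assumes sign: "pm = 1 \<or> pm = -1" and ij: "0 < i" "0 < j" "i \<noteq> j"
  shows "par_sign a * par_sign (b - (if i \<in> {1..<j} then mu_parity p q pm \<gamma> j i else 0))
       = (of_int (mu_int p q pm \<gamma> i j) *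
          (par_sign b * par_sign (a + (if j \<in> {1..<i} then mu_parity p q pm \<gamma> i j else 0))) :: 'k::comm_ring_1)"
proof (cases "i < j")
  case True
  then have "i \<in> {1..<j}" "j \<notin> {1..<i}" using ij by auto
  then show ?thesis
    by (simp add: par_sign_diff mu_parity_sym[of p q pm \<gamma> j i] par_sign_mu_parity[OF sign] mult_ac)
next
  case False
  then have "i \<notin> {1..<j}" "j \<in> {1..<i}" using ij by auto
  moreover have "of_int (mu_int p q pm \<gamma> i j) * of_int (mu_int p q pm \<gamma> i j) = (1::'k)"
    using mu_int_cases[OF sign, of p q \<gamma> i j] by auto
  ultimately show ?thesis
    by (simp add: par_sign_add par_sign_mu_parity[OF sign] mult_ac)
qed

definition gamma_cond_I :: "nat \<Rightarrow> nat \<Rightarrow> int \<Rightarrow> (nat \<Rightarrow> nat \<Rightarrow> int) \<Rightarrow> nat \<Rightarrow> bool" where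
  "gamma_cond_I p q pm \<gamma> m \<longleftrightarrow> (\<forall>j\<in>{1..p+q}. \<forall>i\<in>{1..m}. lam p pm j j = -1 \<longrightarrow> \<bar>\<gamma> j i\<bar> \<le> 1)"

definition gamma_cond_II :: "nat \<Rightarrow> nat \<Rightarrow> int \<Rightarrow> (nat \<Rightarrow> nat \<Rightarrow> int) \<Rightarrow> nat \<Rightarrow> bool" where
  "gamma_cond_II p q pm \<gamma> m \<longleftrightarrow> (\<forall>i\<in>{1..m}. \<forall>i'\<in>{1..m}. i \<noteq> i' \<longrightarrow>
      ((\<exists>k\<in>{1..p+q}. lam p pm k k = -1 \<and> \<gamma> k i * \<gamma> k i' < 0)
       \<or> (\<forall>k\<in>{1..p+q}. \<gamma> k i * \<gamma> k i' \<le> 0)))"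

text \<open>This is where conditions (i) and (ii) enter: factor by factor, the square roots either
  telescope to the same product, or a boolean coordinate makes both sides vanish.\<close>

lemma sqrt_uji_prod_comm:
  assumes condI: "gamma_cond_I p q pm \<gamma> m" and condII: "gamma_cond_II p q pm \<gamma> m"
    and ij: "i \<in> {1..m}" "j \<in> {1..m}" "i \<noteq> j"
  shows "(\<Prod>k\<in>{1..p+q}. sqrt_uji p pm k (\<gamma> k i) (x k - \<gamma> k i) * sqrt_uji p pm k (\<gamma> k j) (x k - \<gamma> k i))
       = (\<Prod>k\<in>{1..p+q}. sqrt_uji p pm k (\<gamma> k j) (x k) * sqrt_uji p pm k (\<gamma> k i) (x k + \<gamma> k j - \<gamma> k i)
           :: 'k::alg_closed_field)"
proof -
  from condII ij consider (bool) k0 where "k0 \<in> {1..p+q}" "lam p pm k0 k0 = -1" "\<gamma> k0 i * \<gamma> k0 j < 0"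
    | (opposite) "\<forall>k\<in>{1..p+q}. \<gamma> k i * \<gamma> k j \<le> 0"
    unfolding gamma_cond_II_def by blast
  then show ?thesis
  proof cases
    case bool
    have "\<bar>\<gamma> k0 i\<bar> \<le> 1" "\<bar>\<gamma> k0 j\<bar> \<le> 1" using condI bool ij by (auto simp: gamma_cond_I_def)
    note vanish = sqrt_uji_bool_opposite[OF bool(2,3) this, of "x k0", where 'k='k]
    have "(\<Prod>k\<in>{1..p+q}. sqrt_uji p pm k (\<gamma> k i) (x k - \<gamma> k i) * sqrt_uji p pm k (\<gamma> k j) (x k - \<gamma> k i)) = (0::'k)"
      "(\<Prod>k\<in>{1..p+q}. sqrt_uji p pm k (\<gamma> k j) (x k) * sqrt_uji p pm k (\<gamma> k i) (x k + \<gamma> k j - \<gamma> k i)) = (0::'k)"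
      using bool(1) vanish by (auto intro!: prod_zero)
    then show ?thesis by (simp del: prod_zero_iff)
  next
    case opposite
    show ?thesis
    proof (rule prod.cong[OF refl])
      fix k assume k: "k \<in> {1..p+q}"
      show "sqrt_uji p pm k (\<gamma> k i) (x k - \<gamma> k i) * sqrt_uji p pm k (\<gamma> k j) (x k - \<gamma> k i)
          = (sqrt_uji p pm k (\<gamma> k j) (x k) * sqrt_uji p pm k (\<gamma> k i) (x k + \<gamma> k j - \<gamma> k i) :: 'k)"
      proof (cases "lam p pm k k = -1")
        case True
        have "\<bar>\<gamma> k i\<bar> \<le> 1" "\<bar>\<gamma> k j\<bar> \<le> 1" using condI True k ij by (auto simp: gamma_cond_I_def)
        moreover have "\<gamma> k i * \<gamma> k j \<le> 0" using opposite k by blast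
        ultimately show ?thesis using sqrt_uji_comm_bool[OF True] by blast
      next
        case False
        moreover have "\<gamma> k i * \<gamma> k j \<le> 0" using opposite k by blast
        ultimately show ?thesis using sqrt_uji_comm_nonbool by blast
      qed
    qed
  qed
qed

lemma gen_weight_comm:
  assumes sign: "pm = 1 \<or> pm = -1"
    and condI: "gamma_cond_I p q pm \<gamma> m" and condII: "gamma_cond_II p q pm \<gamma> m"
    and ij: "i \<in> {1..m}" "j \<in> {1..m}" "i \<noteq> j"
  shows "gen_weight p q pm \<gamma> i s * gen_weight p q pm \<gamma> j (s - sym_shift (p+q) \<gamma> (GX i) + sym_shift (p+q) \<gamma> (GX j))
       = (of_int (mu_int p q pm \<gamma> i j) *
          (gen_weight p q pm \<gamma> j (s + sym_shift (p+q) \<gamma> (GX j)) * gen_weight p q pm \<gamma> i (s + sym_shift (p+q) \<gamma> (GX j)))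
          :: 'k::alg_closed_field)"
proof -
  have "0 < i" "0 < j" using ij by auto
  note twist = par_sign_mu_twist[OF sign this ij(3)]
  show ?thesis
    unfolding gen_weight_XY gen_weight_YX sqrt_uji_prod_comm[OF condI condII ij] twist
    by (simp only: mult.assoc)
qed

definition vars_in :: "nat \<Rightarrow> 'k::comm_ring_1 pol \<Rightarrow> bool" where
  "vars_in n r \<longleftrightarrow> (\<forall>mon\<in>Poly_Mapping.keys r. Poly_Mapping.keys mon \<subseteq> {1..n})"

lemma vars_in_zero [simp]: "vars_in n 0" by (simp add: vars_in_def)

lemma vars_in_add: "vars_in n r \<Longrightarrow> vars_in n s \<Longrightarrow> vars_in n (r + s)"
  using keys_add[of r s] by (auto simp: vars_in_def)

lemma vars_in_uminus: "vars_in n r \<Longrightarrow> vars_in n (- r)"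
  by (simp add: vars_in_def keys_def)

lemma vars_in_diff: "vars_in n r \<Longrightarrow> vars_in n s \<Longrightarrow> vars_in n (r - s)"
  using vars_in_add[of n r "- s"] vars_in_uminus[of n s] by simp

lemma vars_in_mult: "vars_in n r \<Longrightarrow> vars_in n s \<Longrightarrow> vars_in n (r * s)"
  unfolding vars_in_def
proof
  fix mon assume r: "\<forall>mon\<in>Poly_Mapping.keys r. Poly_Mapping.keys mon \<subseteq> {1..n}"
    and s: "\<forall>mon\<in>Poly_Mapping.keys s. Poly_Mapping.keys mon \<subseteq> {1..n}"
    and mon: "mon \<in> Poly_Mapping.keys (r * s)"
  then obtain a b where "mon = a + b" "a \<in> Poly_Mapping.keys r" "b \<in> Poly_Mapping.keys s"
    using keys_mult[of r s] by blast
  then show "Poly_Mapping.keys mon \<subseteq> {1..n}" using r s keys_add[of a b] by blast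
qed

lemma vars_in_sum: "(\<And>i. i \<in> I \<Longrightarrow> vars_in n (r i)) \<Longrightarrow> vars_in n (\<Sum>i\<in>I. r i)"
  by (induction I rule: infinite_finite_induct) (auto intro: vars_in_add)

lemma vars_in_pc [simp]: "vars_in n (pc c)" by (simp add: vars_in_def pc_def)

lemma vars_in_one [simp]: "vars_in n 1" using vars_in_pc[of n 1] by (simp add: pc_def)

lemma vars_in_prod: "(\<And>i. i \<in> I \<Longrightarrow> vars_in n (r i)) \<Longrightarrow> vars_in n (\<Prod>i\<in>I. r i)"
  by (induction I rule: infinite_finite_induct) (auto intro: vars_in_mult)

lemma vars_in_power: "vars_in n r \<Longrightarrow> vars_in n (r ^ e)"
  by (induction e) (auto intro: vars_in_mult)

lemma vars_in_var: "j \<in> {1..n} \<Longrightarrow> vars_in n (var j)" by (simp add: vars_in_def var_def)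

lemma vars_in_of_nat [simp]: "vars_in n (of_nat c)" using vars_in_pc[of n "of_nat c"] by (simp add: pc_def)

lemma vars_in_of_int [simp]: "vars_in n (of_int c)" using vars_in_pc[of n "of_int c"] by (simp add: pc_def)

lemma vars_in_psubst:
  assumes "vars_in n r" "\<And>v. v \<in> {1..n} \<Longrightarrow> vars_in n (\<phi> v)"
  shows "vars_in n (psubst \<phi> r)"
  unfolding psubst_def using assms
  by (intro vars_in_sum vars_in_mult vars_in_pc vars_in_prod vars_in_power assms(2)) (use assms(1) in \<open>unfold vars_in_def, blast\<close>)+

lemma vars_in_tau: "j \<in> {1..n} \<Longrightarrow> vars_in n r \<Longrightarrow> vars_in n (tau p pm j r)"
  unfolding tau_def by (rule vars_in_psubst) (auto intro!: vars_in_mult vars_in_diff vars_in_var)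

lemma vars_in_tau_inv: "j \<in> {1..n} \<Longrightarrow> vars_in n r \<Longrightarrow> vars_in n (tau_inv p pm j r)"
  unfolding tau_inv_def by (rule vars_in_psubst) (auto intro!: vars_in_mult vars_in_add vars_in_var)

lemma vars_in_funpow:
  fixes f :: "'k::comm_ring_1 pol \<Rightarrow> 'k pol"
  assumes "\<And>r. vars_in n r \<Longrightarrow> vars_in n (f r)" "vars_in n r"
  shows "vars_in n ((f ^^ k) r)"
proof (induction k)
  case 0 then show ?case using assms(2) by simp
next
  case (Suc k) then show ?case using assms(1) by simp
qed

lemma vars_in_tau_pow: "j \<in> {1..n} \<Longrightarrow> vars_in n r \<Longrightarrow> vars_in n (tau_pow p pm j k r)"
  unfolding tau_pow_def by (auto intro!: vars_in_funpow vars_in_tau vars_in_tau_inv)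

lemma vars_in_foldr: "set L \<subseteq> {1..n} \<Longrightarrow> vars_in n r \<Longrightarrow> vars_in n (foldr (\<lambda>j f. tau_pow p pm j (c j) \<circ> f) L id r)"
  by (induction L arbitrary: r) (auto intro: vars_in_tau_pow)

lemma vars_in_sigma: "vars_in (p+q) r \<Longrightarrow> vars_in (p+q) (sigma p q pm \<gamma> i r)"
  unfolding sigma_def by (rule vars_in_foldr) auto

lemma vars_in_sigma_inv: "vars_in (p+q) r \<Longrightarrow> vars_in (p+q) (sigma_inv p q pm \<gamma> i r)"
  unfolding sigma_inv_def by (rule vars_in_foldr) auto

lemma vars_in_sigw: "vars_in (p+q) r \<Longrightarrow> vars_in (p+q) (sigw p q pm \<gamma> w r)"
proof (induction w arbitrary: r)
  case Nil then show ?case by simp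
next
  case (Cons x w) then show ?case by (cases x) (auto intro: vars_in_sigma vars_in_sigma_inv)
qed

definition word_in :: "nat \<Rightarrow> gsym list \<Rightarrow> bool" where
  "word_in m w \<longleftrightarrow> (\<forall>s\<in>set w. sidx s \<in> {1..m})"

lemma word_in_append [simp]: "word_in m (w @ v) \<longleftrightarrow> word_in m w \<and> word_in m v"
  by (auto simp: word_in_def)

lemma word_in_Cons [simp]: "word_in m (x # v) \<longleftrightarrow> sidx x \<in> {1..m} \<and> word_in m v"
  by (auto simp: word_in_def)

lemma word_in_Nil [simp]: "word_in m []" by (simp add: word_in_def)

lemma Fcar_iff: "f \<in> Fcar n m \<longleftrightarrow> (\<forall>w. vars_in n (Poly_Mapping.lookup f w) \<and>
     (Poly_Mapping.lookup f w \<noteq> 0 \<longrightarrow> word_in m w))"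
proof
  assume f: "f \<in> Fcar n m"
  show "\<forall>w. vars_in n (Poly_Mapping.lookup f w) \<and> (Poly_Mapping.lookup f w \<noteq> 0 \<longrightarrow> word_in m w)"
  proof
    fix w show "vars_in n (Poly_Mapping.lookup f w) \<and> (Poly_Mapping.lookup f w \<noteq> 0 \<longrightarrow> word_in m w)"
    proof (cases "Poly_Mapping.lookup f w = 0")
      case True then show ?thesis by simp
    next
      case False then have "w \<in> Poly_Mapping.keys f" by (simp add: in_keys_iff)
      then show ?thesis using f unfolding Fcar_def vars_in_def word_in_def by blast
    qed
  qed
next
  assume h: "\<forall>w. vars_in n (Poly_Mapping.lookup f w) \<and> (Poly_Mapping.lookup f w \<noteq> 0 \<longrightarrow> word_in m w)"
  show "f \<in> Fcar n m"
    unfolding Fcar_def using h unfolding vars_in_def word_in_def in_keys_iff[symmetric] by blast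
qed

lemma Fcar_zero [simp]: "0 \<in> Fcar n m" by (simp add: Fcar_iff)

lemma Fcar_single: "word_in m w \<Longrightarrow> vars_in n c \<Longrightarrow> Poly_Mapping.single w c \<in> Fcar n m"
  by (auto simp: Fcar_iff lookup_single when_def)

lemma Fcar_add: "f \<in> Fcar n m \<Longrightarrow> g \<in> Fcar n m \<Longrightarrow> f + g \<in> Fcar n m"
  unfolding Fcar_iff lookup_add by (metis add.left_neutral add.right_neutral vars_in_add)

lemma Fcar_uminus: "f \<in> Fcar n m \<Longrightarrow> - f \<in> Fcar n m"
  by (auto simp: Fcar_iff intro: vars_in_uminus)

lemma Fcar_diff: "f \<in> Fcar n m \<Longrightarrow> g \<in> Fcar n m \<Longrightarrow> f - g \<in> Fcar n m"
  using Fcar_add[of f n m "- g"] Fcar_uminus[of g n m] by simp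

lemma Fcar_sum: "(\<And>i. i \<in> I \<Longrightarrow> f i \<in> Fcar n m) \<Longrightarrow> (\<Sum>i\<in>I. f i) \<in> Fcar n m"
  by (induction I rule: infinite_finite_induct) (auto intro: Fcar_add)

lemma Fcar_keys: "f \<in> Fcar n m \<Longrightarrow> w \<in> Poly_Mapping.keys f \<Longrightarrow> word_in m w \<and> vars_in n (Poly_Mapping.lookup f w)"
  by (auto simp: Fcar_iff in_keys_iff)

lemma gmult_Fcar: "f \<in> Fcar (p+q) m \<Longrightarrow> g \<in> Fcar (p+q) m \<Longrightarrow> gmult p q pm \<gamma> f g \<in> Fcar (p+q) m"
  unfolding gmult_def
  by (intro Fcar_sum Fcar_single) (auto dest: Fcar_keys intro!: vars_in_mult vars_in_sigw)

lemma is_idealI: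
  "J \<subseteq> Fcar (p+q) m \<Longrightarrow> 0 \<in> J \<Longrightarrow> (\<forall>a\<in>J. \<forall>b\<in>J. a - b \<in> J) \<Longrightarrow>
   (\<forall>a\<in>J. \<forall>c\<in>Fcar (p+q) m. gmult p q pm \<gamma> c a \<in> J \<and> gmult p q pm \<gamma> a c \<in> J) \<Longrightarrow>
   is_ideal p q pm \<gamma> m J"
  by (simp add: is_ideal_def)

lemma is_ideal_zero: "is_ideal p q pm \<gamma> m J \<Longrightarrow> 0 \<in> J"
  by (simp add: is_ideal_def)

lemma is_ideal_diff: "is_ideal p q pm \<gamma> m J \<Longrightarrow> a \<in> J \<Longrightarrow> b \<in> J \<Longrightarrow> a - b \<in> J"
  by (simp add: is_ideal_def)

lemma is_ideal_multL: "is_ideal p q pm \<gamma> m J \<Longrightarrow> a \<in> J \<Longrightarrow> c \<in> Fcar (p+q) m \<Longrightarrow> gmult p q pm \<gamma> c a \<in> J"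
  by (simp add: is_ideal_def)

lemma is_ideal_multR: "is_ideal p q pm \<gamma> m J \<Longrightarrow> a \<in> J \<Longrightarrow> c \<in> Fcar (p+q) m \<Longrightarrow> gmult p q pm \<gamma> a c \<in> J"
  by (simp add: is_ideal_def)

lemma Fcar_ideal: "is_ideal p q pm \<gamma> m (Fcar (p+q) m)"
  unfolding is_ideal_def by (intro conjI ballI subset_refl Fcar_zero Fcar_diff gmult_Fcar)

lemma gen_ideal_ideal:
  fixes S :: "'k::comm_ring_1 tgw set"
  assumes "S \<subseteq> Fcar (p+q) m"
  shows "is_ideal p q pm \<gamma> m (gen_ideal p q pm \<gamma> m S)"
proof -
  let ?F = "{J. is_ideal p q pm \<gamma> m J \<and> S \<subseteq> J}"
  have F: "Fcar (p+q) m \<in> ?F" using assms Fcar_ideal by simp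
  have sub: "\<Inter>?F \<subseteq> Fcar (p+q) m" using F by blast
  have z: "0 \<in> \<Inter>?F" by (auto simp: is_ideal_def)
  have d: "\<forall>a\<in>\<Inter>?F. \<forall>b\<in>\<Inter>?F. a - b \<in> \<Inter>?F"
  proof (intro ballI InterI)
    fix a b :: "'k tgw" and J assume "a \<in> \<Inter>?F" "b \<in> \<Inter>?F" "J \<in> ?F"
    then have "a \<in> J" "b \<in> J" "is_ideal p q pm \<gamma> m J" by auto
    then show "a - b \<in> J" unfolding is_ideal_def by blast
  qed
  have mu: "\<forall>a\<in>\<Inter>?F. \<forall>c\<in>Fcar (p+q) m. gmult p q pm \<gamma> c a \<in> \<Inter>?F \<and> gmult p q pm \<gamma> a c \<in> \<Inter>?F"
  proof (intro ballI conjI InterI)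
    fix a c :: "'k tgw" and J assume "a \<in> \<Inter>?F" "c \<in> Fcar (p+q) m" "J \<in> ?F"
    then have "a \<in> J" "c \<in> Fcar (p+q) m" "is_ideal p q pm \<gamma> m J" by auto
    then show "gmult p q pm \<gamma> c a \<in> J" unfolding is_ideal_def by blast
  next
    fix a c :: "'k tgw" and J assume "a \<in> \<Inter>?F" "c \<in> Fcar (p+q) m" "J \<in> ?F"
    then have "a \<in> J" "c \<in> Fcar (p+q) m" "is_ideal p q pm \<gamma> m J" by auto
    then show "gmult p q pm \<gamma> a c \<in> J" unfolding is_ideal_def by blast
  qed
  show ?thesis unfolding gen_ideal_def by (rule is_idealI[OF sub z d mu])
qed

lemma gen_ideal_least:
  "is_ideal p q pm \<gamma> m J \<Longrightarrow> S \<subseteq> J \<Longrightarrow> gen_ideal p q pm \<gamma> m S \<subseteq> J"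
  unfolding gen_ideal_def by blast

lemma gen_ideal_sub: "S \<subseteq> Fcar (p+q) m \<Longrightarrow> S \<subseteq> gen_ideal p q pm \<gamma> m S"
  unfolding gen_ideal_def by blast

lemma vars_in_uji: "j \<in> {1..n} \<Longrightarrow> vars_in n (uji \<gamma> j i)"
  by (auto simp: uji_def intro!: vars_in_prod vars_in_add vars_in_diff vars_in_var)

lemma vars_in_tt: "vars_in (p+q) (tt p q \<gamma> i)"
  unfolding tt_def by (intro vars_in_prod vars_in_uji) auto

lemma rels_Fcar: "(rels p q pm \<gamma> m :: 'k::comm_ring_1 tgw set) \<subseteq> Fcar (p+q) m"
  unfolding rels_def
proof (intro Un_least subsetI)
  fix x :: "'k tgw" assume "x \<in> {Poly_Mapping.single [] (var j ^ 2 - var j) | j. j \<in> {1..p+q} \<and> lam p pm j j = -1}"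
  then obtain j where "x = Poly_Mapping.single [] (var j ^ 2 - var j)" "j \<in> {1..p+q}" by blast
  then show "x \<in> Fcar (p+q) m" by (auto intro!: Fcar_single vars_in_diff vars_in_power vars_in_var)
next
  fix x :: "'k tgw" assume "x \<in> {Poly_Mapping.single [GY i, GX i] 1 - Poly_Mapping.single [] (tt p q \<gamma> i) | i. i \<in> {1..m}}"
  then obtain i where "x = Poly_Mapping.single [GY i, GX i] 1 - Poly_Mapping.single [] (tt p q \<gamma> i)" "i \<in> {1..m}" by blast
  then show "x \<in> Fcar (p+q) m" by (auto intro!: Fcar_diff Fcar_single vars_in_tt)
next
  fix x :: "'k tgw" assume "x \<in> {Poly_Mapping.single [GX i, GY i] 1 - Poly_Mapping.single [] (sigma p q pm \<gamma> i (tt p q \<gamma> i)) | i. i \<in> {1..m}}"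
  then obtain i where "x = Poly_Mapping.single [GX i, GY i] 1 - Poly_Mapping.single [] (sigma p q pm \<gamma> i (tt p q \<gamma> i))" "i \<in> {1..m}" by blast
  then show "x \<in> Fcar (p+q) m" by (auto intro!: Fcar_diff Fcar_single vars_in_tt vars_in_sigma)
next
  fix x :: "'k tgw" assume "x \<in> {Poly_Mapping.single [GX i, GY j] 1 - Poly_Mapping.single [GY j, GX i] (pc (mu p q pm \<gamma> i j))
        | i j. i \<in> {1..m} \<and> j \<in> {1..m} \<and> i \<noteq> j}"
  then obtain i j where "x = Poly_Mapping.single [GX i, GY j] 1 - Poly_Mapping.single [GY j, GX i] (pc (mu p q pm \<gamma> i j))"
     "i \<in> {1..m}" "j \<in> {1..m}" by blast
  then show "x \<in> Fcar (p+q) m" by (auto intro!: Fcar_diff Fcar_single)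
qed

lemma Irel_ideal: "is_ideal p q pm \<gamma> m (Irel p q pm \<gamma> m)"
  unfolding Irel_def by (rule gen_ideal_ideal[OF rels_Fcar])

lemma rels_Irel: "rels p q pm \<gamma> m \<subseteq> Irel p q pm \<gamma> m"
  unfolding Irel_def by (rule gen_ideal_sub[OF rels_Fcar])

section \<open>The kernel of the representation\<close>

abbreviation rep_tgw :: "nat \<Rightarrow> nat \<Rightarrow> int \<Rightarrow> (nat \<Rightarrow> nat \<Rightarrow> int) \<Rightarrow> 'k::alg_closed_field tgw \<Rightarrow> (state \<Rightarrow> 'k) \<Rightarrow> state \<Rightarrow> 'k" where
  "rep_tgw p q pm \<gamma> \<equiv> rep p pm (gen_weight p q pm \<gamma>) (p+q) \<gamma>"

lemma rep_zero_fun: "rep p pm \<alpha> n \<gamma> x (\<lambda>_. 0) s = 0"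
  by (simp add: rep_def lin_ext_def)

lemma sym_shift_GY_GX: "sym_shift n \<gamma> (GY i) = - sym_shift n \<gamma> (GX i)"
  by (simp add: sym_shift_def)

definition rep_kernel :: "nat \<Rightarrow> nat \<Rightarrow> int \<Rightarrow> (nat \<Rightarrow> nat \<Rightarrow> int) \<Rightarrow> nat \<Rightarrow> 'k::alg_closed_field tgw set" where
  "rep_kernel p q pm \<gamma> m = {x \<in> Fcar (p+q) m. \<forall>f s. rep_tgw p q pm \<gamma> x f s = 0}"

lemma rep_kernel_ideal:
  assumes sign: "pm = 1 \<or> pm = -1"
  shows "is_ideal p q pm \<gamma> m (rep_kernel p q pm \<gamma> m :: 'k::alg_closed_field tgw set)"
proof (rule is_idealI)
  show "rep_kernel p q pm \<gamma> m \<subseteq> Fcar (p + q) m" by (auto simp: rep_kernel_def)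
  show "(0::'k tgw) \<in> rep_kernel p q pm \<gamma> m" by (simp add: rep_kernel_def)
  show "\<forall>a\<in>rep_kernel p q pm \<gamma> m. \<forall>b\<in>rep_kernel p q pm \<gamma> m. a - b \<in> (rep_kernel p q pm \<gamma> m :: 'k tgw set)"
    by (auto simp: rep_kernel_def rep_diff intro: Fcar_diff)
  show "\<forall>a\<in>rep_kernel p q pm \<gamma> m. \<forall>c\<in>Fcar (p + q) m.
      gmult p q pm \<gamma> c a \<in> (rep_kernel p q pm \<gamma> m :: 'k tgw set) \<and> gmult p q pm \<gamma> a c \<in> rep_kernel p q pm \<gamma> m"
  proof (intro ballI conjI)
    fix a c :: "'k tgw" assume a: "a \<in> rep_kernel p q pm \<gamma> m" and c: "c \<in> Fcar (p + q) m"
    then have aF: "a \<in> Fcar (p+q) m" and a0: "rep_tgw p q pm \<gamma> a f = (\<lambda>_. 0)" for f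
      by (auto simp: rep_kernel_def)
    show "gmult p q pm \<gamma> c a \<in> rep_kernel p q pm \<gamma> m" "gmult p q pm \<gamma> a c \<in> rep_kernel p q pm \<gamma> m"
      using aF c a0 by (auto simp: rep_kernel_def gmult_Fcar rep_gmult[OF sign] rep_zero_fun)
  qed
qed

lemma eval_state_one [simp]: "eval_state p pm s 1 = 1"
  by (simp add: eval_state_def)

lemma rep_rel_idempotent:
  assumes "lam p pm j j = -1"
  shows "rep p pm \<alpha> n \<gamma> (Poly_Mapping.single [] (var j ^ 2 - var j)) f s = (0::'k::comm_ring_1)"
proof -
  have "fst s j mod 2 = 0 \<or> fst s j mod 2 = 1" by auto
  then have "eval_state p pm s (var j ^ 2 - var j) = (0::'k)"
    using assms by (auto simp: eval_state_def peval_diff peval_power eval_pt_def)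
  then show ?thesis by (simp add: rep_single)
qed

lemma rep_rel_YX:
  "rep_tgw p q pm \<gamma> (Poly_Mapping.single [GY i, GX i] 1 - Poly_Mapping.single [] (tt p q \<gamma> i)) f s = (0::'k::alg_closed_field)"
proof -
  have "word_weight (gen_weight p q pm \<gamma>) (p+q) \<gamma> [GY i, GX i] s
      = (gen_weight p q pm \<gamma> i (s + sym_shift (p+q) \<gamma> (GX i)) ^ 2 :: 'k)"
    by (simp add: sym_shift_GY_GX power2_eq_square)
  then show ?thesis
    by (simp add: rep_diff rep_single sym_shift_GY_GX gen_weight_square)
qed

lemma rep_rel_XY:
  assumes sign: "pm = 1 \<or> pm = -1"
  shows "rep_tgw p q pm \<gamma> (Poly_Mapping.single [GX i, GY i] 1 - Poly_Mapping.single [] (sigma p q pm \<gamma> i (tt p q \<gamma> i))) f s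
       = (0::'k::alg_closed_field)"
proof -
  let ?d = "sym_shift (p+q) \<gamma> (GX i)"
  have "word_weight (gen_weight p q pm \<gamma>) (p+q) \<gamma> [GX i, GY i] s = (gen_weight p q pm \<gamma> i ((s - ?d) + ?d) ^ 2 :: 'k)"
    by (simp add: sym_shift_GY_GX power2_eq_square)
  also have "\<dots> = eval_state p pm (s - ?d) (tt p q \<gamma> i)"
    by (rule gen_weight_square)
  also have "\<dots> = eval_state p pm s (sigma p q pm \<gamma> i (tt p q \<gamma> i))"
    by (simp add: eval_state_def sym_shift_GX peval_sigma[OF sign])
  finally show ?thesis
    by (simp add: rep_diff rep_single sym_shift_GY_GX)
qed

lemma rep_rel_comm:
  assumes sign: "pm = 1 \<or> pm = -1"
    and condI: "gamma_cond_I p q pm \<gamma> m" and condII: "gamma_cond_II p q pm \<gamma> m"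
    and ij: "i \<in> {1..m}" "j \<in> {1..m}" "i \<noteq> j"
  shows "rep_tgw p q pm \<gamma> (Poly_Mapping.single [GX i, GY j] 1 - Poly_Mapping.single [GY j, GX i] (pc (mu p q pm \<gamma> i j))) f s
       = (0::'k::alg_closed_field)"
proof -
  let ?d = "\<lambda>i. sym_shift (p+q) \<gamma> (GX i)"
  let ?w = "word_weight (gen_weight p q pm \<gamma>) (p+q) \<gamma>"
  have "?w [GX i, GY j] s = (gen_weight p q pm \<gamma> i s * gen_weight p q pm \<gamma> j (s - ?d i + ?d j) :: 'k)"
    by (simp add: sym_shift_GY_GX)
  also have "\<dots> = of_int (mu_int p q pm \<gamma> i j) * (gen_weight p q pm \<gamma> j (s + ?d j) * gen_weight p q pm \<gamma> i (s + ?d j))"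
    by (rule gen_weight_comm[OF sign condI condII ij])
  also have "gen_weight p q pm \<gamma> j (s + ?d j) * gen_weight p q pm \<gamma> i (s + ?d j) = ?w [GY j, GX i] s"
    by (simp add: sym_shift_GY_GX)
  finally have w: "?w [GX i, GY j] s = (of_int (mu_int p q pm \<gamma> i j) * ?w [GY j, GX i] s :: 'k)" .
  moreover have shift: "word_shift (p+q) \<gamma> [GX i, GY j] = word_shift (p+q) \<gamma> [GY j, GX i]"
    by (simp add: add.commute)
  show ?thesis
    unfolding rep_diff rep_single w shift by (simp add: eval_state_def mu_eq_mu_int)
qed

lemma rels_subset_rep_kernel:
  assumes sign: "pm = 1 \<or> pm = -1"
    and condI: "gamma_cond_I p q pm \<gamma> m" and condII: "gamma_cond_II p q pm \<gamma> m"
  shows "(rels p q pm \<gamma> m :: 'k::alg_closed_field tgw set) \<subseteq> rep_kernel p q pm \<gamma> m"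
proof
  fix x :: "'k tgw" assume x: "x \<in> rels p q pm \<gamma> m"
  have "rep_tgw p q pm \<gamma> x f s = 0" for f s
  proof -
    from x consider
        (idempotent) j where "x = Poly_Mapping.single [] (var j ^ 2 - var j)" "lam p pm j j = -1"
      | (YX) i where "x = Poly_Mapping.single [GY i, GX i] 1 - Poly_Mapping.single [] (tt p q \<gamma> i)"
      | (XY) i where "x = Poly_Mapping.single [GX i, GY i] 1 - Poly_Mapping.single [] (sigma p q pm \<gamma> i (tt p q \<gamma> i))"
      | (comm) i j where "x = Poly_Mapping.single [GX i, GY j] 1 - Poly_Mapping.single [GY j, GX i] (pc (mu p q pm \<gamma> i j))"
            "i \<in> {1..m}" "j \<in> {1..m}" "i \<noteq> j"
      unfolding rels_def by blast
    then show ?thesis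
    proof cases
      case comm
      show ?thesis unfolding comm(1) by (rule rep_rel_comm[OF sign condI condII comm(2-4)])
    qed (simp_all only: rep_rel_idempotent rep_rel_YX rep_rel_XY[OF sign])
  qed
  moreover have "x \<in> Fcar (p+q) m"
    using rels_Fcar x by blast
  ultimately show "x \<in> rep_kernel p q pm \<gamma> m"
    by (simp add: rep_kernel_def)
qed

lemma Irel_subset_rep_kernel:
  assumes sign: "pm = 1 \<or> pm = -1"
    and condI: "gamma_cond_I p q pm \<gamma> m" and condII: "gamma_cond_II p q pm \<gamma> m"
  shows "(Irel p q pm \<gamma> m :: 'k::alg_closed_field tgw set) \<subseteq> rep_kernel p q pm \<gamma> m"
  unfolding Irel_def by (rule gen_ideal_least[OF rep_kernel_ideal[OF sign] rels_subset_rep_kernel[OF sign condI condII]])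

lemma pc_add: "pc (a + b) = pc a + (pc b :: 'k::comm_ring_1 pol)"
  by (simp add: pc_def single_add)

lemma pc_mult: "pc (a * b) = pc a * (pc b :: 'k::comm_ring_1 pol)"
  by (simp add: pc_def mult_single)

lemma pc_zero [simp]: "pc 0 = (0 :: 'k::comm_ring_1 pol)" by (simp add: pc_def)
lemma pc_one [simp]: "pc 1 = (1 :: 'k::comm_ring_1 pol)" by (simp add: pc_def)

lemma psubst_add: "psubst \<phi> (r + s) = psubst \<phi> r + psubst \<phi> (s :: 'k::comm_ring_1 pol)"
proof -
  have "psubst \<phi> r = lin_ext (\<lambda>mon c. pc c * (\<Prod>v\<in>Poly_Mapping.keys mon. \<phi> v ^ Poly_Mapping.lookup mon v)) r" for r
    by (simp add: psubst_def lin_ext_def)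
  moreover have "lin_ext (\<lambda>mon c. pc c * (\<Prod>v\<in>Poly_Mapping.keys mon. \<phi> v ^ Poly_Mapping.lookup mon v)) (r + s) =
    lin_ext (\<lambda>mon c. pc c * (\<Prod>v\<in>Poly_Mapping.keys mon. \<phi> v ^ Poly_Mapping.lookup mon v)) r +
    lin_ext (\<lambda>mon c. pc c * (\<Prod>v\<in>Poly_Mapping.keys mon. \<phi> v ^ Poly_Mapping.lookup mon v)) s"
    by (rule lin_ext_add) (simp_all add: pc_add distrib_right)
  ultimately show ?thesis by simp
qed

lemma psubst_pc: "psubst \<phi> (pc c) = (pc c :: 'k::comm_ring_1 pol)"
  by (cases "c = 0") (simp_all add: psubst_def pc_def)

lemma tau_pc: "tau p pm j (pc c) = (pc c :: 'k::comm_ring_1 pol)"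
  by (simp add: tau_def psubst_pc)

lemma tau_inv_pc: "tau_inv p pm j (pc c) = (pc c :: 'k::comm_ring_1 pol)"
  by (simp add: tau_inv_def psubst_pc)

lemma tau_pow_pc: "tau_pow p pm j k (pc c) = (pc c :: 'k::comm_ring_1 pol)"
proof -
  have "((tau p pm j) ^^ n) (pc c) = (pc c :: 'k pol)" for n
    by (induction n) (simp_all add: tau_pc)
  moreover have "((tau_inv p pm j) ^^ n) (pc c) = (pc c :: 'k pol)" for n
    by (induction n) (simp_all add: tau_inv_pc)
  ultimately show ?thesis by (simp add: tau_pow_def)
qed

lemma foldr_tau_pc: "foldr (\<lambda>j f. tau_pow p pm j (c j) \<circ> f) L id (pc a) = (pc a :: 'k::comm_ring_1 pol)"
  by (induction L) (simp_all add: tau_pow_pc)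

lemma sigw_pc: "sigw p q pm \<gamma> w (pc c) = (pc c :: 'k::comm_ring_1 pol)"
proof (induction w)
  case Nil then show ?case by simp
next
  case (Cons x w) then show ?case
    by (cases x) (simp_all add: sigma_def sigma_inv_def foldr_tau_pc)
qed

lemma sigw_one: "sigw p q pm \<gamma> w 1 = (1 :: 'k::comm_ring_1 pol)"
  using sigw_pc[of p q pm \<gamma> w 1] by simp

lemma tau_add: "tau p pm j (r + s) = tau p pm j r + tau p pm j (s :: 'k::comm_ring_1 pol)"
  by (simp add: tau_def psubst_add)

lemma tau_inv_add: "tau_inv p pm j (r + s) = tau_inv p pm j r + tau_inv p pm j (s :: 'k::comm_ring_1 pol)"
  by (simp add: tau_inv_def psubst_add)

lemma funpow_add_hom:
  fixes f :: "'a::plus \<Rightarrow> 'a"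
  shows "(\<And>r s. f (r + s) = f r + f s) \<Longrightarrow> (f ^^ k) (r + s) = (f ^^ k) r + (f ^^ k) s"
  by (induction k) auto

lemma tau_pow_add: "tau_pow p pm j k (r + s) = tau_pow p pm j k r + tau_pow p pm j k (s :: 'k::comm_ring_1 pol)"
  by (simp add: tau_pow_def funpow_add_hom tau_add tau_inv_add)

lemma foldr_tau_add: "foldr (\<lambda>j f. tau_pow p pm j (c j) \<circ> f) L id (r + s) =
   foldr (\<lambda>j f. tau_pow p pm j (c j) \<circ> f) L id r + foldr (\<lambda>j f. tau_pow p pm j (c j) \<circ> f) L id (s :: 'k::comm_ring_1 pol)"
  by (induction L) (simp_all add: tau_pow_add)

lemma sigw_add: "sigw p q pm \<gamma> w (r + s) = sigw p q pm \<gamma> w r + sigw p q pm \<gamma> w (s :: 'k::comm_ring_1 pol)"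
proof (induction w)
  case Nil then show ?case by simp
next
  case (Cons x w) then show ?case
    by (cases x) (simp_all add: sigma_def sigma_inv_def foldr_tau_add)
qed

lemma sigw_zero: "sigw p q pm \<gamma> w 0 = (0 :: 'k::comm_ring_1 pol)"
  using sigw_add[of p q pm \<gamma> w 0 0] by simp

lemma gmult_lin: "gmult p q pm \<gamma> f h =
  lin_ext (\<lambda>w c. lin_ext (\<lambda>v d. Poly_Mapping.single (w @ v) (c * sigw p q pm \<gamma> w d)) h) f"
  by (simp add: gmult_def lin_ext_def)

lemma lin_ext_plus_fun:
  "lin_ext (\<lambda>k x. G k x + H k x) p = lin_ext G p + lin_ext H (p :: 'a \<Rightarrow>\<^sub>0 'b::zero)"
  by (simp add: lin_ext_def sum.distrib)

lemma gmult_add_right: "gmult p q pm \<gamma> f (g + h) = gmult p q pm \<gamma> f g + gmult p q pm \<gamma> f (h :: 'k::comm_ring_1 tgw)"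
proof -
  have "lin_ext (\<lambda>v d. Poly_Mapping.single (w @ v) (c * sigw p q pm \<gamma> w d)) (g + h) =
        lin_ext (\<lambda>v d. Poly_Mapping.single (w @ v) (c * sigw p q pm \<gamma> w d)) g +
        lin_ext (\<lambda>v d. Poly_Mapping.single (w @ v) (c * sigw p q pm \<gamma> w d)) h" for w c
    by (rule lin_ext_add) (simp_all add: sigw_zero sigw_add distrib_left single_add)
  then show ?thesis by (simp add: gmult_lin lin_ext_plus_fun)
qed

lemma gmult_add_left: "gmult p q pm \<gamma> (f + g) h = gmult p q pm \<gamma> f h + gmult p q pm \<gamma> g (h :: 'k::comm_ring_1 tgw)"
  unfolding gmult_lin
  by (rule lin_ext_add) (simp_all add: distrib_right single_add lin_ext_def sum.distrib)

lemma gmult_zero_right [simp]: "gmult p q pm \<gamma> f 0 = (0 :: 'k::comm_ring_1 tgw)"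
  by (simp add: gmult_def)

lemma gmult_zero_left [simp]: "gmult p q pm \<gamma> 0 f = (0 :: 'k::comm_ring_1 tgw)"
  by (simp add: gmult_def)

lemma gmult_uminus_right: "gmult p q pm \<gamma> f (- g) = - gmult p q pm \<gamma> f (g :: 'k::comm_ring_1 tgw)"
  using gmult_add_right[of p q pm \<gamma> f "- g" g] by (simp add: eq_neg_iff_add_eq_0)
lemma gmult_uminus_left: "gmult p q pm \<gamma> (- f) g = - gmult p q pm \<gamma> f (g :: 'k::comm_ring_1 tgw)"
  using gmult_add_left[of p q pm \<gamma> "- f" f g] by (simp add: eq_neg_iff_add_eq_0)

lemma gmult_diff_right: "gmult p q pm \<gamma> f (g - h) = gmult p q pm \<gamma> f g - gmult p q pm \<gamma> f (h :: 'k::comm_ring_1 tgw)"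
  using gmult_add_right[of p q pm \<gamma> f g "- h"] by (simp add: gmult_uminus_right)
lemma gmult_diff_left: "gmult p q pm \<gamma> (f - g) h = gmult p q pm \<gamma> f h - gmult p q pm \<gamma> g (h :: 'k::comm_ring_1 tgw)"
  using gmult_add_left[of p q pm \<gamma> f "- g" h] by (simp add: gmult_uminus_left)

lemma gmult_single: "gmult p q pm \<gamma> (Poly_Mapping.single w c) (Poly_Mapping.single v d) =
   Poly_Mapping.single (w @ v) (c * sigw p q pm \<gamma> w (d :: 'k::comm_ring_1 pol))"
  by (cases "c = 0"; cases "d = 0") (simp_all add: gmult_def sigw_zero)

lemma is_ideal_add: "is_ideal p q pm \<gamma> m J \<Longrightarrow> a \<in> J \<Longrightarrow> b \<in> J \<Longrightarrow> a + (b::'k::comm_ring_1 tgw) \<in> J"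
  using is_ideal_diff[of p q pm \<gamma> m J a "0 - b"] is_ideal_diff[of p q pm \<gamma> m J 0 b] is_ideal_zero[of p q pm \<gamma> m J]
  by simp

lemma is_ideal_uminus: "is_ideal p q pm \<gamma> m J \<Longrightarrow> b \<in> J \<Longrightarrow> - (b::'k::comm_ring_1 tgw) \<in> J"
  using is_ideal_diff[of p q pm \<gamma> m J 0 b] is_ideal_zero[of p q pm \<gamma> m J] by simp

lemma is_ideal_sum: "is_ideal p q pm \<gamma> m J \<Longrightarrow> (\<And>i. i \<in> I \<Longrightarrow> f i \<in> J) \<Longrightarrow> (\<Sum>i\<in>I. f i :: 'k::comm_ring_1 tgw) \<in> J"
  by (induction I rule: infinite_finite_induct) (auto intro: is_ideal_add is_ideal_zero)

section \<open>Reduction of degree-zero words\<close>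

lemma rel_idempotent_mem: "j \<in> {1..p+q} \<Longrightarrow> lam p pm j j = -1 \<Longrightarrow>
   Poly_Mapping.single [] (var j ^ 2 - var j) \<in> rels p q pm \<gamma> m"
  unfolding rels_def by (intro UnI1) blast

lemma rel_YX_mem: "i \<in> {1..m} \<Longrightarrow>
   Poly_Mapping.single [GY i, GX i] 1 - Poly_Mapping.single [] (tt p q \<gamma> i) \<in> rels p q pm \<gamma> m"
  unfolding rels_def by (intro UnI1 UnI2) blast

lemma rel_XY_mem: "i \<in> {1..m} \<Longrightarrow>
   Poly_Mapping.single [GX i, GY i] 1 - Poly_Mapping.single [] (sigma p q pm \<gamma> i (tt p q \<gamma> i)) \<in> rels p q pm \<gamma> m"
  unfolding rels_def by (intro UnI1 UnI2) blast

lemma rel_comm_mem: "i \<in> {1..m} \<Longrightarrow> j \<in> {1..m} \<Longrightarrow> i \<noteq> j \<Longrightarrow>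
   Poly_Mapping.single [GX i, GY j] 1 - Poly_Mapping.single [GY j, GX i] (pc (mu p q pm \<gamma> i j)) \<in> rels p q pm \<gamma> m"
  unfolding rels_def by (intro UnI2) blast

(* The type argument only fixes the coefficient field. *)
definition reduces_to :: "nat \<Rightarrow> nat \<Rightarrow> int \<Rightarrow> (nat \<Rightarrow> nat \<Rightarrow> int) \<Rightarrow> nat \<Rightarrow> 'k::comm_ring_1 itself \<Rightarrow> gsym list \<Rightarrow> gsym list \<Rightarrow> bool" where
  "reduces_to p q pm \<gamma> m T u v \<longleftrightarrow> word_in m u \<and> word_in m v \<and>
     (\<forall>c::'k pol. vars_in (p+q) c \<longrightarrow> (\<exists>c'. vars_in (p+q) c' \<and>
         Poly_Mapping.single u c - Poly_Mapping.single v c' \<in> Irel p q pm \<gamma> m))"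

definition commuting_syms :: "gsym \<Rightarrow> gsym \<Rightarrow> bool" where
  "commuting_syms x y \<longleftrightarrow> (\<exists>c d. x = GX c \<and> y = GY d \<and> c \<noteq> d) \<or> (\<exists>c d. x = GY d \<and> y = GX c \<and> c \<noteq> d)"

lemma wdeg_append: "wdeg (u @ v) = (\<lambda>k. wdeg u k + wdeg v k)"
  by (induction u rule: wdeg.induct) (simp_all add: algebra_simps)

lemma wdeg_cancel_pair: "wdeg (u @ x # v @ sswap x # w) = wdeg (u @ v @ w)"
proof -
  have "wdeg [x] k + wdeg [sswap x] k = 0" for k
    by (cases x) auto
  then show ?thesis
    using wdeg_append[of "[x]" "v @ sswap x # w"] wdeg_append[of "[sswap x]" w]
    by (simp add: wdeg_append fun_eq_iff algebra_simps)
qed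

lemma wdeg_count: "wdeg w k = int (length (filter (\<lambda>x. x = GX k) w)) - int (length (filter (\<lambda>x. x = GY k) w))"
  by (induction w rule: wdeg.induct) auto

(* Invariant for reducing a word from left to right: the processed prefix is xs @ ys. *)
definition XY_prefix :: "gsym list \<Rightarrow> gsym list \<Rightarrow> bool" where
  "XY_prefix xs ys \<longleftrightarrow> (\<forall>x\<in>set xs. \<exists>i. x = GX i) \<and> (\<forall>y\<in>set ys. \<exists>i. y = GY i)
     \<and> (\<forall>x\<in>set xs. \<forall>y\<in>set ys. sidx x \<noteq> sidx y)"

lemma XY_prefix_mono: "XY_prefix xs ys \<Longrightarrow> set xs' \<subseteq> set xs \<Longrightarrow> set ys' \<subseteq> set ys \<Longrightarrow> XY_prefix xs' ys'"
  unfolding XY_prefix_def by blast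

lemma XY_prefix_snoc_X: "XY_prefix xs ys \<Longrightarrow> GY a \<notin> set ys \<Longrightarrow> XY_prefix (xs @ [GX a]) ys"
  unfolding XY_prefix_def by auto

lemma XY_prefix_snoc_Y: "XY_prefix xs ys \<Longrightarrow> GX b \<notin> set xs \<Longrightarrow> XY_prefix xs (ys @ [GY b])"
  unfolding XY_prefix_def by auto

lemma XY_prefix_commuting: "XY_prefix xs ys \<Longrightarrow> \<forall>x\<in>set xs. \<forall>y\<in>set ys. commuting_syms x y"
  unfolding XY_prefix_def commuting_syms_def by fastforce

lemma XY_prefix_commuting': "XY_prefix xs ys \<Longrightarrow> \<forall>y\<in>set ys. \<forall>x\<in>set xs. commuting_syms y x"
  unfolding XY_prefix_def commuting_syms_def by fastforce

lemma XY_prefix_commuting_X: "XY_prefix xs ys \<Longrightarrow> GY a \<notin> set ys \<Longrightarrow> \<forall>y\<in>set ys. \<forall>x\<in>set [GX a]. commuting_syms y x"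
  unfolding XY_prefix_def commuting_syms_def by auto

lemma XY_prefix_commuting_Y: "XY_prefix xs ys \<Longrightarrow> GX b \<notin> set xs \<Longrightarrow> \<forall>x\<in>set xs. \<forall>y\<in>set [GY b]. commuting_syms x y"
  unfolding XY_prefix_def commuting_syms_def by auto

lemma XY_prefix_degree_zero_Nil:
  assumes "XY_prefix xs ys" "wdeg (xs @ ys) = (\<lambda>_. 0)"
  shows "xs = [] \<and> ys = []"
proof (rule ccontr)
  assume "\<not> (xs = [] \<and> ys = [])"
  then obtain x where x: "x \<in> set (xs @ ys)" by (metis append_is_Nil_conv list.set_intros(1) neq_Nil_conv)
  let ?count = "\<lambda>x. int (length (filter (\<lambda>z. z = x) (xs @ ys)))"
  have "filter (\<lambda>z. z = x) (xs @ ys) \<noteq> []"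
    using x by (auto simp del: filter_append simp: filter_empty_conv)
  then have "?count x > 0" by (simp del: filter_append)
  moreover have "sswap x \<notin> set (xs @ ys)"
    using assms(1) x by (cases x) (force simp: XY_prefix_def)+
  then have "filter (\<lambda>z. z = sswap x) (xs @ ys) = []"
    by (auto simp del: filter_append simp: filter_empty_conv)
  then have "?count (sswap x) = 0" by (simp del: filter_append)
  ultimately have "wdeg (xs @ ys) (sidx x) \<noteq> 0"
    by (cases x) (simp_all del: filter_append add: wdeg_count)
  then show False using assms(2) by simp
qed

context
  fixes p q m :: nat and pm :: int and \<gamma> :: "nat \<Rightarrow> nat \<Rightarrow> int" and T :: "'k::comm_ring_1 itself"
  assumes sign: "pm = 1 \<or> pm = -1"
begin

abbreviation "reduces \<equiv> reduces_to p q pm \<gamma> m T"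
abbreviation "IR \<equiv> (Irel p q pm \<gamma> m :: 'k tgw set)"

lemma reduces_to_refl: "word_in m u \<Longrightarrow> reduces u u"
  unfolding reduces_to_def
proof (intro conjI allI impI)
  fix c :: "'k pol" assume "vars_in (p+q) c"
  moreover have "(0::'k tgw) \<in> IR" by (rule is_ideal_zero[OF Irel_ideal])
  ultimately show "\<exists>c'. vars_in (p+q) c' \<and> Poly_Mapping.single u c - Poly_Mapping.single u c' \<in> IR"
    by (intro exI[of _ c]) simp
qed

lemma reduces_to_trans:
  assumes "reduces u v" "reduces v w" shows "reduces u w"
  unfolding reduces_to_def
proof (intro conjI allI impI)
  show "word_in m u" "word_in m w" using assms by (auto simp: reduces_to_def)
  fix c :: "'k pol" assume c: "vars_in (p+q) c"
  obtain c' where c': "vars_in (p+q) c'" "Poly_Mapping.single u c - Poly_Mapping.single v c' \<in> IR"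
    using assms(1) c unfolding reduces_to_def by blast
  obtain c'' where c'': "vars_in (p+q) c''" "Poly_Mapping.single v c' - Poly_Mapping.single w c'' \<in> IR"
    using assms(2) c'(1) unfolding reduces_to_def by blast
  have "(Poly_Mapping.single u c - Poly_Mapping.single v c') + (Poly_Mapping.single v c' - Poly_Mapping.single w c'') \<in> IR"
    by (rule is_ideal_add[OF Irel_ideal c'(2) c''(2)])
  then show "\<exists>c'. vars_in (p+q) c' \<and> Poly_Mapping.single u c - Poly_Mapping.single w c' \<in> IR"
    using c''(1) by auto
qed

lemma reduces_to_context:
  assumes "reduces w w'" "word_in m u" "word_in m v"
  shows "reduces (u @ w @ v) (u @ w' @ v)"
  unfolding reduces_to_def
proof (intro conjI allI impI)
  show "word_in m (u @ w @ v)" "word_in m (u @ w' @ v)" using assms by (auto simp: reduces_to_def)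
  fix c :: "'k pol" assume c: "vars_in (p+q) c"
  obtain c' where c': "vars_in (p+q) c'" "Poly_Mapping.single w 1 - Poly_Mapping.single w' c' \<in> IR"
    using assms(1) unfolding reduces_to_def by force
  have uF: "Poly_Mapping.single u c \<in> Fcar (p+q) m" using assms(2) c by (rule Fcar_single)
  have vF: "Poly_Mapping.single v (1::'k pol) \<in> Fcar (p+q) m" using assms(3) by (simp add: Fcar_single)
  have "gmult p q pm \<gamma> (Poly_Mapping.single u c)
          (gmult p q pm \<gamma> (Poly_Mapping.single w 1 - Poly_Mapping.single w' c') (Poly_Mapping.single v 1)) \<in> IR"
    by (rule is_ideal_multL[OF Irel_ideal is_ideal_multR[OF Irel_ideal c'(2) vF] uF])
  then have "Poly_Mapping.single (u @ w @ v) c - Poly_Mapping.single (u @ w' @ v) (c * sigw p q pm \<gamma> u c') \<in> IR"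
    by (simp add: gmult_diff_left gmult_diff_right gmult_single sigw_one)
  moreover have "vars_in (p+q) (c * sigw p q pm \<gamma> u c')" using c c'(1) by (simp add: vars_in_mult vars_in_sigw)
  ultimately show "\<exists>c'. vars_in (p+q) c' \<and> Poly_Mapping.single (u @ w @ v) c - Poly_Mapping.single (u @ w' @ v) c' \<in> IR"
    by blast
qed

lemma reduces_to_rel:
  assumes "Poly_Mapping.single u 1 - Poly_Mapping.single v r \<in> (rels p q pm \<gamma> m :: 'k tgw set)"
    and "vars_in (p+q) r" "word_in m u" "word_in m v"
  shows "reduces u v"
  unfolding reduces_to_def
proof (intro conjI allI impI)
  fix c :: "'k pol" assume c: "vars_in (p+q) c"
  have "gmult p q pm \<gamma> (Poly_Mapping.single [] c) (Poly_Mapping.single u 1 - Poly_Mapping.single v r) \<in> IR"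
    using assms(1) c by (intro is_ideal_multL[OF Irel_ideal] subsetD[OF rels_Irel] Fcar_single) auto
  then have "Poly_Mapping.single u c - Poly_Mapping.single v (c * r) \<in> IR"
    by (simp add: gmult_diff_right gmult_single)
  then show "\<exists>c'. vars_in (p+q) c' \<and> Poly_Mapping.single u c - Poly_Mapping.single v c' \<in> IR"
    using c assms(2) by (blast intro: vars_in_mult)
qed (use assms in auto)

lemma reduces_to_YX_cancel: "i \<in> {1..m} \<Longrightarrow> reduces [GY i, GX i] []"
  by (rule reduces_to_rel[OF rel_YX_mem]) (auto intro: vars_in_tt)

lemma reduces_to_XY_cancel: "i \<in> {1..m} \<Longrightarrow> reduces [GX i, GY i] []"
  by (rule reduces_to_rel[OF rel_XY_mem]) (auto intro: vars_in_tt vars_in_sigma)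

lemma reduces_to_XY_swap: "i \<in> {1..m} \<Longrightarrow> j \<in> {1..m} \<Longrightarrow> i \<noteq> j \<Longrightarrow> reduces [GX i, GY j] [GY j, GX i]"
  by (rule reduces_to_rel[OF rel_comm_mem]) auto

lemma mu_square: "pc (mu p q pm \<gamma> i j) * pc (mu p q pm \<gamma> i j) = (1 :: 'k pol)"
proof -
  have "mu p q pm \<gamma> i j * mu p q pm \<gamma> i j = (1::'k)"
    using mu_int_cases[OF sign, of p q \<gamma> i j] by (auto simp: mu_eq_mu_int)
  then show ?thesis by (simp add: pc_mult[symmetric])
qed

lemma reduces_to_YX_swap:
  assumes "i \<in> {1..m}" "j \<in> {1..m}" "i \<noteq> j" shows "reduces [GY j, GX i] [GX i, GY j]"
  unfolding reduces_to_def
proof (intro conjI allI impI)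
  show "word_in m [GY j, GX i]" "word_in m [GX i, GY j]" using assms by auto
  fix c :: "'k pol" assume c: "vars_in (p+q) c"
  let ?\<mu> = "pc (mu p q pm \<gamma> i j) :: 'k pol"
  have "gmult p q pm \<gamma> (Poly_Mapping.single [] (c * ?\<mu>))
      (Poly_Mapping.single [GX i, GY j] 1 - Poly_Mapping.single [GY j, GX i] ?\<mu>) \<in> IR"
    using rel_comm_mem[OF assms] c
    by (intro is_ideal_multL[OF Irel_ideal] subsetD[OF rels_Irel] Fcar_single) (auto intro: vars_in_mult)
  then have "- (Poly_Mapping.single [GX i, GY j] (c * ?\<mu>) - Poly_Mapping.single [GY j, GX i] (c * (?\<mu> * ?\<mu>))) \<in> IR"
    by (intro is_ideal_uminus[OF Irel_ideal]) (simp add: gmult_diff_right gmult_single mult.assoc)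
  then have "Poly_Mapping.single [GY j, GX i] c - Poly_Mapping.single [GX i, GY j] (c * ?\<mu>) \<in> IR"
    by (simp add: mu_square)
  then show "\<exists>c'. vars_in (p+q) c' \<and> Poly_Mapping.single [GY j, GX i] c - Poly_Mapping.single [GX i, GY j] c' \<in> IR"
    using c by (blast intro: vars_in_mult vars_in_pc)
qed

lemma reduces_to_swap: "commuting_syms x y \<Longrightarrow> sidx x \<in> {1..m} \<Longrightarrow> sidx y \<in> {1..m} \<Longrightarrow> reduces [x, y] [y, x]"
  unfolding commuting_syms_def using reduces_to_XY_swap reduces_to_YX_swap by auto

lemma reduces_to_move_sym:
  assumes "\<forall>y\<in>set B. commuting_syms x y" "word_in m (u @ [x] @ B @ v)"
  shows "reduces (u @ [x] @ B @ v) (u @ B @ [x] @ v)"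
  using assms
proof (induction B arbitrary: u)
  case Nil then show ?case by (simp add: reduces_to_refl)
next
  case (Cons y B)
  have "reduces [x, y] [y, x]" using Cons.prems by (intro reduces_to_swap) (auto simp: word_in_def)
  then have "reduces (u @ [x, y] @ (B @ v)) (u @ [y, x] @ (B @ v))"
    by (rule reduces_to_context) (use Cons.prems in \<open>auto simp: word_in_def\<close>)
  moreover have "reduces ((u @ [y]) @ [x] @ B @ v) ((u @ [y]) @ B @ [x] @ v)"
    by (rule Cons.IH) (use Cons.prems in \<open>auto simp: word_in_def\<close>)
  ultimately show ?case using reduces_to_trans by fastforce
qed

lemma reduces_to_move_block:
  assumes "\<forall>x\<in>set A. \<forall>y\<in>set B. commuting_syms x y" "word_in m (u @ A @ B @ v)"
  shows "reduces (u @ A @ B @ v) (u @ B @ A @ v)"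
  using assms
proof (induction A arbitrary: u)
  case Nil then show ?case by (simp add: reduces_to_refl)
next
  case (Cons x A)
  have "reduces ((u @ [x]) @ A @ B @ v) ((u @ [x]) @ B @ A @ v)"
    by (rule Cons.IH) (use Cons.prems in \<open>auto simp: word_in_def\<close>)
  moreover have "reduces (u @ [x] @ B @ (A @ v)) (u @ B @ [x] @ (A @ v))"
    by (rule reduces_to_move_sym) (use Cons.prems in \<open>auto simp: word_in_def\<close>)
  ultimately show ?case using reduces_to_trans by fastforce
qed

lemma reduces_step_X_cancel:
  assumes IH: "\<And>xs ys. XY_prefix xs ys \<Longrightarrow> word_in m (xs @ ys @ w) \<Longrightarrow> wdeg (xs @ ys @ w) = (\<lambda>_. 0)
      \<Longrightarrow> reduces (xs @ ys @ w) []"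
    and prefix: "XY_prefix xs ys" and word: "word_in m (xs @ ys @ GX a # w)"
    and deg: "wdeg (xs @ ys @ GX a # w) = (\<lambda>_. 0)" and a: "GY a \<in> set ys"
  shows "reduces (xs @ ys @ GX a # w) []"
proof -
  obtain ys1 ys2 where ys: "ys = ys1 @ GY a # ys2" "GY a \<notin> set ys2"
    using a split_list_last by metis
  have "XY_prefix xs ys2" by (rule XY_prefix_mono[OF prefix]) (auto simp: ys(1))
  then have "\<forall>y\<in>set ys2. \<forall>x\<in>set [GX a]. commuting_syms y x"
    by (rule XY_prefix_commuting_X[OF _ ys(2)])
  then have "reduces ((xs @ ys1 @ [GY a]) @ ys2 @ [GX a] @ w) ((xs @ ys1 @ [GY a]) @ [GX a] @ ys2 @ w)"
    by (rule reduces_to_move_block) (use word ys in simp)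
  then have 1: "reduces (xs @ ys @ GX a # w) (xs @ ys1 @ GY a # GX a # ys2 @ w)"
    using ys(1) by simp
  have "reduces ((xs @ ys1) @ [GY a, GX a] @ (ys2 @ w)) ((xs @ ys1) @ [] @ (ys2 @ w))"
    by (rule reduces_to_context[OF reduces_to_YX_cancel]) (use word ys in auto)
  then have 2: "reduces (xs @ ys1 @ GY a # GX a # ys2 @ w) (xs @ (ys1 @ ys2) @ w)"
    by simp
  have 3: "reduces (xs @ (ys1 @ ys2) @ w) []"
  proof (rule IH)
    show "XY_prefix xs (ys1 @ ys2)" by (rule XY_prefix_mono[OF prefix]) (auto simp: ys(1))
    show "word_in m (xs @ (ys1 @ ys2) @ w)" using word ys by auto
    show "wdeg (xs @ (ys1 @ ys2) @ w) = (\<lambda>_. 0)"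
      using deg wdeg_cancel_pair[of "xs @ ys1" "GY a" ys2 w] ys(1) by simp
  qed
  show ?thesis by (rule reduces_to_trans[OF reduces_to_trans[OF 1 2] 3])
qed

lemma reduces_step_X_push:
  assumes IH: "\<And>xs ys. XY_prefix xs ys \<Longrightarrow> word_in m (xs @ ys @ w) \<Longrightarrow> wdeg (xs @ ys @ w) = (\<lambda>_. 0)
      \<Longrightarrow> reduces (xs @ ys @ w) []"
    and prefix: "XY_prefix xs ys" and word: "word_in m (xs @ ys @ GX a # w)"
    and deg: "wdeg (xs @ ys @ GX a # w) = (\<lambda>_. 0)" and a: "GY a \<notin> set ys"
  shows "reduces (xs @ ys @ GX a # w) []"
proof -
  have "reduces (xs @ ys @ [GX a] @ w) (xs @ [GX a] @ ys @ w)"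
    by (rule reduces_to_move_block[OF XY_prefix_commuting_X[OF prefix a]]) (use word in simp)
  then have 1: "reduces (xs @ ys @ GX a # w) ((xs @ [GX a]) @ ys @ w)"
    by simp
  have 2: "reduces ((xs @ [GX a]) @ ys @ w) []"
  proof (rule IH)
    show "XY_prefix (xs @ [GX a]) ys" by (rule XY_prefix_snoc_X[OF prefix a])
    show "word_in m ((xs @ [GX a]) @ ys @ w)" using word by auto
    show "wdeg ((xs @ [GX a]) @ ys @ w) = (\<lambda>_. 0)"
      using deg by (simp add: wdeg_append algebra_simps)
  qed
  show ?thesis by (rule reduces_to_trans[OF 1 2])
qed

lemma reduces_step_Y_cancel:
  assumes IH: "\<And>xs ys. XY_prefix xs ys \<Longrightarrow> word_in m (xs @ ys @ w) \<Longrightarrow> wdeg (xs @ ys @ w) = (\<lambda>_. 0)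
      \<Longrightarrow> reduces (xs @ ys @ w) []"
    and prefix: "XY_prefix xs ys" and word: "word_in m (xs @ ys @ GY b # w)"
    and deg: "wdeg (xs @ ys @ GY b # w) = (\<lambda>_. 0)" and b: "GX b \<in> set xs"
  shows "reduces (xs @ ys @ GY b # w) []"
proof -
  obtain xs1 xs2 where xs: "xs = xs1 @ GX b # xs2" "GX b \<notin> set xs2"
    using b split_list_last by metis
  have "reduces ([] @ xs @ ys @ ([GY b] @ w)) ([] @ ys @ xs @ ([GY b] @ w))"
    by (rule reduces_to_move_block[OF XY_prefix_commuting[OF prefix]]) (use word in simp)
  then have 1: "reduces (xs @ ys @ GY b # w) (ys @ xs1 @ GX b # xs2 @ GY b # w)"
    using xs(1) by simp
  have "XY_prefix xs2 ys" by (rule XY_prefix_mono[OF prefix]) (auto simp: xs(1))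
  then have "\<forall>x\<in>set xs2. \<forall>y\<in>set [GY b]. commuting_syms x y"
    by (rule XY_prefix_commuting_Y[OF _ xs(2)])
  then have "reduces ((ys @ xs1 @ [GX b]) @ xs2 @ [GY b] @ w) ((ys @ xs1 @ [GX b]) @ [GY b] @ xs2 @ w)"
    by (rule reduces_to_move_block) (use word xs in simp)
  then have 2: "reduces (ys @ xs1 @ GX b # xs2 @ GY b # w) (ys @ xs1 @ GX b # GY b # xs2 @ w)"
    by simp
  have "reduces ((ys @ xs1) @ [GX b, GY b] @ (xs2 @ w)) ((ys @ xs1) @ [] @ (xs2 @ w))"
    by (rule reduces_to_context[OF reduces_to_XY_cancel]) (use word xs in auto)
  then have 3: "reduces (ys @ xs1 @ GX b # GY b # xs2 @ w) (ys @ (xs1 @ xs2) @ w)"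
    by simp
  have prefix': "XY_prefix (xs1 @ xs2) ys" by (rule XY_prefix_mono[OF prefix]) (auto simp: xs(1))
  have "reduces ([] @ ys @ (xs1 @ xs2) @ w) ([] @ (xs1 @ xs2) @ ys @ w)"
    by (rule reduces_to_move_block[OF XY_prefix_commuting'[OF prefix']]) (use word xs in simp)
  then have 4: "reduces (ys @ (xs1 @ xs2) @ w) ((xs1 @ xs2) @ ys @ w)"
    by simp
  have 5: "reduces ((xs1 @ xs2) @ ys @ w) []"
  proof (rule IH)
    show "XY_prefix (xs1 @ xs2) ys" by (rule prefix')
    show "word_in m ((xs1 @ xs2) @ ys @ w)" using word xs by auto
    show "wdeg ((xs1 @ xs2) @ ys @ w) = (\<lambda>_. 0)"
      using deg wdeg_cancel_pair[of xs1 "GX b" "xs2 @ ys" w] xs(1) by simp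
  qed
  show ?thesis
    by (rule reduces_to_trans[OF reduces_to_trans[OF reduces_to_trans[OF reduces_to_trans[OF 1 2] 3] 4] 5])
qed

lemma reduces_step_Y_push:
  assumes IH: "\<And>xs ys. XY_prefix xs ys \<Longrightarrow> word_in m (xs @ ys @ w) \<Longrightarrow> wdeg (xs @ ys @ w) = (\<lambda>_. 0)
      \<Longrightarrow> reduces (xs @ ys @ w) []"
    and prefix: "XY_prefix xs ys" and word: "word_in m (xs @ ys @ GY b # w)"
    and deg: "wdeg (xs @ ys @ GY b # w) = (\<lambda>_. 0)" and b: "GX b \<notin> set xs"
  shows "reduces (xs @ ys @ GY b # w) []"
proof -
  have "reduces (xs @ (ys @ [GY b]) @ w) []"
  proof (rule IH)
    show "XY_prefix xs (ys @ [GY b])" by (rule XY_prefix_snoc_Y[OF prefix b])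
  qed (use word deg in auto)
  then show ?thesis by simp
qed

lemma reduces_prefix_to_Nil:
  "XY_prefix xs ys \<Longrightarrow> word_in m (xs @ ys @ w) \<Longrightarrow> wdeg (xs @ ys @ w) = (\<lambda>_. 0) \<Longrightarrow> reduces (xs @ ys @ w) []"
proof (induction w arbitrary: xs ys)
  case Nil
  then have "xs = [] \<and> ys = []" using XY_prefix_degree_zero_Nil by auto
  then show ?case by (simp add: reduces_to_refl)
next
  case (Cons y w)
  show ?case
  proof (cases y)
    case (GX a)
    show ?thesis
    proof (cases "GY a \<in> set ys")
      case True
      from reduces_step_X_cancel[OF Cons.IH Cons.prems[unfolded GX] True] show ?thesis unfolding GX .
    next
      case False
      from reduces_step_X_push[OF Cons.IH Cons.prems[unfolded GX] False] show ?thesis unfolding GX .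
    qed
  next
    case (GY b)
    show ?thesis
    proof (cases "GX b \<in> set xs")
      case True
      from reduces_step_Y_cancel[OF Cons.IH Cons.prems[unfolded GY] True] show ?thesis unfolding GY .
    next
      case False
      from reduces_step_Y_push[OF Cons.IH Cons.prems[unfolded GY] False] show ?thesis unfolding GY .
    qed
  qed
qed

lemma degree_zero_reduces_to_Nil: "word_in m w \<Longrightarrow> wdeg w = (\<lambda>_. 0) \<Longrightarrow> reduces w []"
  using reduces_prefix_to_Nil[of "[]" "[]" w] by (simp add: XY_prefix_def)

end

lemma var_pow: "var N ^ d = (Poly_Mapping.single (Poly_Mapping.single N d) 1 :: 'k::comm_ring_1 pol)"
proof (induction d)
  case 0 then show ?case by simp
next
  case (Suc d)
  have "var N ^ Suc d = (Poly_Mapping.single (Poly_Mapping.single N d) 1 :: 'k pol) * var N"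
    by (simp add: Suc mult.commute)
  also have "\<dots> = Poly_Mapping.single (Poly_Mapping.single N (Suc d)) 1"
    by (simp add: var_def mult_single single_add[symmetric])
  finally show ?case .
qed

lemma mono_split:
  "Poly_Mapping.single mon c = var N ^ (Poly_Mapping.lookup mon N) *
     Poly_Mapping.single (Poly_Mapping.update N 0 mon) (c :: 'k::comm_ring_1)"
proof -
  have "Poly_Mapping.single N (Poly_Mapping.lookup mon N) + Poly_Mapping.update N 0 mon = mon"
    by (rule poly_mapping_eqI) (simp add: lookup_add lookup_single lookup_update when_def)
  then show ?thesis by (simp add: var_pow mult_single)
qed

definition var_coeff :: "nat \<Rightarrow> nat \<Rightarrow> 'k::comm_ring_1 pol \<Rightarrow> 'k pol" where
  "var_coeff N d r = (\<Sum>mon\<in>{mon\<in>Poly_Mapping.keys r. Poly_Mapping.lookup mon N = d}.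
                 Poly_Mapping.single (Poly_Mapping.update N 0 mon) (Poly_Mapping.lookup r mon))"

lemma var_decomp:
  assumes "\<forall>mon\<in>Poly_Mapping.keys r. Poly_Mapping.lookup mon N \<le> M"
  shows "r = (\<Sum>d\<in>{..M}. var N ^ d * var_coeff N d (r :: 'k::comm_ring_1 pol))"
proof -
  have "r = (\<Sum>mon\<in>Poly_Mapping.keys r. Poly_Mapping.single mon (Poly_Mapping.lookup r mon))"
    by (rule poly_mapping_sum_single)
  also have "\<dots> = (\<Sum>mon\<in>Poly_Mapping.keys r. var N ^ (Poly_Mapping.lookup mon N) *
      Poly_Mapping.single (Poly_Mapping.update N 0 mon) (Poly_Mapping.lookup r mon))"
    by (subst mono_split) (rule refl)
  also have "\<dots> = (\<Sum>d\<in>{..M}. \<Sum>mon\<in>{mon\<in>Poly_Mapping.keys r. Poly_Mapping.lookup mon N = d}.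
      var N ^ (Poly_Mapping.lookup mon N) * Poly_Mapping.single (Poly_Mapping.update N 0 mon) (Poly_Mapping.lookup r mon))"
    by (rule sum.group[symmetric]) (use assms in auto)
  also have "\<dots> = (\<Sum>d\<in>{..M}. var N ^ d * var_coeff N d r)"
    unfolding var_coeff_def sum_distrib_left by (intro sum.cong refl) auto
  finally show ?thesis .
qed

lemma vars_in_var_coeff:
  assumes "vars_in (Suc N) r"
  shows "vars_in N (var_coeff (Suc N) d r)"
  unfolding vars_in_def
proof
  fix mon assume "mon \<in> Poly_Mapping.keys (var_coeff (Suc N) d r)"
  then have "mon \<in> (\<Union>mon'\<in>{mon\<in>Poly_Mapping.keys r. Poly_Mapping.lookup mon (Suc N) = d}.
      Poly_Mapping.keys (Poly_Mapping.single (Poly_Mapping.update (Suc N) 0 mon') (Poly_Mapping.lookup r mon')))"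
    unfolding var_coeff_def by (rule subsetD[OF keys_sum])
  then obtain mon' where "mon' \<in> Poly_Mapping.keys r" "mon \<in> Poly_Mapping.keys (Poly_Mapping.single (Poly_Mapping.update (Suc N) 0 mon') (Poly_Mapping.lookup r mon'))"
    by blast
  then have "mon = Poly_Mapping.update (Suc N) 0 mon'" "Poly_Mapping.keys mon' \<subseteq> {1..Suc N}"
    using assms by (auto simp: vars_in_def split: if_splits)
  then show "Poly_Mapping.keys mon \<subseteq> {1..N}" by (auto simp: keys_update)
qed

lemma vars_in_mono: "vars_in N r \<Longrightarrow> N \<le> M \<Longrightarrow> vars_in M r"
  unfolding vars_in_def
proof
  fix mon assume "\<forall>mon\<in>Poly_Mapping.keys r. Poly_Mapping.keys mon \<subseteq> {1..N}" "N \<le> M" "mon \<in> Poly_Mapping.keys r"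
  then have "Poly_Mapping.keys mon \<subseteq> {1..N}" "{1..N} \<subseteq> {1..M}" by auto
  then show "Poly_Mapping.keys mon \<subseteq> {1..M}" by (rule order_trans)
qed

lemma peval_var_coeff_indep:
  assumes "vars_in (Suc N) r" "\<And>v. v \<noteq> Suc N \<Longrightarrow> P v = Q v"
  shows "peval P (var_coeff (Suc N) d r) = peval Q (var_coeff (Suc N) d r)"
proof (rule peval_cong)
  fix mon v assume "mon \<in> Poly_Mapping.keys (var_coeff (Suc N) d r)" "v \<in> Poly_Mapping.keys mon"
  then have "v \<in> {1..N}" using vars_in_var_coeff[OF assms(1), of d] unfolding vars_in_def by blast
  then show "P v = Q v" using assms(2) by simp
qed

lemma poly_vanish_on_ints:
  fixes e :: "nat \<Rightarrow> 'k::field_char_0"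
  assumes "\<forall>x::int. (\<Sum>d\<in>{..M}. of_int x ^ d * e d) = 0"
  shows "d \<le> M \<Longrightarrow> e d = 0"
proof -
  let ?P = "\<Sum>d\<in>{..M}. monom (e d) d"
  have roots: "poly ?P (of_int x) = 0" for x
    using assms by (simp add: poly_sum poly_monom mult.commute)
  have "?P = 0"
  proof (rule ccontr)
    assume "?P \<noteq> 0"
    then have "finite {x. poly ?P x = 0}" by (rule poly_roots_finite)
    moreover have "range (of_int :: int \<Rightarrow> 'k) \<subseteq> {x. poly ?P x = 0}" using roots by auto
    moreover have "infinite (range (of_int :: int \<Rightarrow> 'k))"
    proof
      assume "finite (range (of_int :: int \<Rightarrow> 'k))"
      moreover have "inj_on (of_int :: int \<Rightarrow> 'k) UNIV" by (auto simp: inj_on_def)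
      ultimately have "finite (UNIV :: int set)" by (rule finite_imageD)
      then show False using infinite_UNIV_int by blast
    qed
    ultimately show False using finite_subset by blast
  qed
  moreover assume "d \<le> M"
  then have "coeff ?P d = e d" by (simp add: coeff_sum)
  ultimately show "e d = 0" by simp
qed

abbreviation scalar_in_Irel :: "nat \<Rightarrow> nat \<Rightarrow> int \<Rightarrow> (nat \<Rightarrow> nat \<Rightarrow> int) \<Rightarrow> nat \<Rightarrow> 'k::comm_ring_1 pol \<Rightarrow> bool" where
  "scalar_in_Irel p q pm \<gamma> m r \<equiv> Poly_Mapping.single [] r \<in> Irel p q pm \<gamma> m"

lemma Irel_zero [simp]: "0 \<in> Irel p q pm \<gamma> m"
  by (rule is_ideal_zero[OF Irel_ideal])

lemma scalar_in_Irel_zero: "scalar_in_Irel p q pm \<gamma> m (0 :: 'k::comm_ring_1 pol)"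
  using is_ideal_zero[OF Irel_ideal] by simp

lemma scalar_in_Irel_add: "scalar_in_Irel p q pm \<gamma> m r \<Longrightarrow> scalar_in_Irel p q pm \<gamma> m s \<Longrightarrow> scalar_in_Irel p q pm \<gamma> m (r + (s :: 'k::comm_ring_1 pol))"
  using is_ideal_add[OF Irel_ideal] by (simp add: single_add)

lemma scalar_in_Irel_sum: "(\<And>i. i \<in> I \<Longrightarrow> scalar_in_Irel p q pm \<gamma> m (r i)) \<Longrightarrow> scalar_in_Irel p q pm \<gamma> m (\<Sum>i\<in>I. r i :: 'k::comm_ring_1 pol)"
  by (induction I rule: infinite_finite_induct) (auto intro: scalar_in_Irel_add scalar_in_Irel_zero)

lemma scalar_in_Irel_mult: "vars_in (p+q) c \<Longrightarrow> scalar_in_Irel p q pm \<gamma> m r \<Longrightarrow> scalar_in_Irel p q pm \<gamma> m (c * (r :: 'k::comm_ring_1 pol))"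
proof -
  assume c: "vars_in (p+q) c" and r: "scalar_in_Irel p q pm \<gamma> m r"
  have "gmult p q pm \<gamma> (Poly_Mapping.single [] c) (Poly_Mapping.single [] r) \<in> Irel p q pm \<gamma> m"
    by (rule is_ideal_multL[OF Irel_ideal r]) (simp add: Fcar_single c)
  then show ?thesis by (simp add: gmult_single)
qed

lemma scalar_in_Irel_var_power:
  assumes "j \<in> {1..p+q}" "lam p pm j j = -1" "d \<ge> 1"
  shows "scalar_in_Irel p q pm \<gamma> m (var j ^ d - (var j :: 'k::comm_ring_1 pol))"
  using assms(3)
proof (induction d rule: dec_induct)
  case base then show ?case using scalar_in_Irel_zero by simp
next
  case (step d)
  have eq: "var j ^ Suc d - var j = var j * (var j ^ d - var j) + (var j ^ 2 - (var j :: 'k pol))"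
    by (simp add: algebra_simps power2_eq_square)
  have "scalar_in_Irel p q pm \<gamma> m (var j ^ 2 - (var j :: 'k pol))"
    using rels_Irel rel_idempotent_mem[OF assms(1,2)] by blast
  then show ?case unfolding eq using step.IH assms(1) by (intro scalar_in_Irel_add scalar_in_Irel_mult vars_in_var)
qed

lemma vars_in_0_vanishing:
  assumes "vars_in 0 r" "peval P r = 0"
  shows "r = 0"
proof (rule poly_mapping_eqI)
  fix mon
  show "Poly_Mapping.lookup r mon = Poly_Mapping.lookup 0 mon"
  proof (cases "mon \<in> Poly_Mapping.keys r")
    case True
    then have "mon = 0" using assms(1) by (auto simp: vars_in_def)
    then have "r = Poly_Mapping.single 0 (Poly_Mapping.lookup r 0)"
      using assms(1) True by (intro poly_mapping_eqI) (auto simp: vars_in_def lookup_single when_def in_keys_iff)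
    then have "peval P r = Poly_Mapping.lookup r 0"
      by (metis peval_single mon_eval_zero mult.right_neutral)
    then show ?thesis using assms(2) \<open>mon = 0\<close> by simp
  next
    case False then show ?thesis by (simp add: in_keys_iff)
  qed
qed

lemma peval_eval_pt_var_decomp:
  fixes r :: "'k::comm_ring_1 pol"
  assumes r: "vars_in (Suc N) r" and M: "\<forall>mon\<in>Poly_Mapping.keys r. Poly_Mapping.lookup mon (Suc N) \<le> M"
  shows "peval (eval_pt p pm (l(Suc N := x))) r
       = (\<Sum>d\<in>{..M}. eval_pt p pm (l(Suc N := x)) (Suc N) ^ d * peval (eval_pt p pm l) (var_coeff (Suc N) d r))"
proof -
  have indep: "peval (eval_pt p pm (l(Suc N := x))) (var_coeff (Suc N) d r) = peval (eval_pt p pm l) (var_coeff (Suc N) d r)" for d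
    by (rule peval_var_coeff_indep[OF r]) (simp add: eval_pt_def)
  show ?thesis
    by (subst var_decomp[OF M]) (simp add: peval_sum peval_mult peval_power indep)
qed

lemma var_degree_bound:
  fixes r :: "('a \<Rightarrow>\<^sub>0 nat) \<Rightarrow>\<^sub>0 'b::zero"
  shows "\<exists>M. \<forall>mon\<in>Poly_Mapping.keys r. Poly_Mapping.lookup mon v \<le> M"
  by (intro exI[of _ "\<Sum>mon\<in>Poly_Mapping.keys r. Poly_Mapping.lookup mon v"] ballI member_le_sum) simp_all

lemma sum_powers_split_idempotent:
  fixes u :: "'a::comm_ring_1"
  shows "(\<Sum>d\<in>{..M}. u ^ d * c d) = c 0 + (u * (\<Sum>d\<in>{1..M}. c d) + (\<Sum>d\<in>{1..M}. c d * (u ^ d - u)))"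
proof -
  have "{..M} = insert 0 {1..M}" by auto
  then have "(\<Sum>d\<in>{..M}. u ^ d * c d) = c 0 + (\<Sum>d\<in>{1..M}. u * c d + c d * (u ^ d - u))"
    by (simp add: algebra_simps)
  then show ?thesis by (simp add: sum.distrib sum_distrib_left)
qed

lemma scalar_in_Irel_step_nonbool:
  fixes r :: "'k::field_char_0 pol"
  assumes IH: "\<And>r. vars_in N r \<Longrightarrow> \<forall>l. peval (eval_pt p pm l) r = (0::'k) \<Longrightarrow> scalar_in_Irel p q pm \<gamma> m r"
    and N: "Suc N \<le> p+q" and r: "vars_in (Suc N) r" and vanish: "\<forall>l. peval (eval_pt p pm l) r = 0"
    and nonbool: "lam p pm (Suc N) (Suc N) \<noteq> -1"
  shows "scalar_in_Irel p q pm \<gamma> m r"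
proof -
  from var_degree_bound obtain M where M: "\<forall>mon\<in>Poly_Mapping.keys r. Poly_Mapping.lookup mon (Suc N) \<le> M" ..
  have coeff_vanish: "peval (eval_pt p pm l) (var_coeff (Suc N) d r) = 0" if "d \<le> M" for l d
  proof (rule poly_vanish_on_ints[OF _ that, where e="\<lambda>d. peval (eval_pt p pm l) (var_coeff (Suc N) d r)"], rule allI)
    fix x :: int
    have "peval (eval_pt p pm (l(Suc N := x))) r = 0" using vanish by blast
    then show "(\<Sum>d\<in>{..M}. of_int x ^ d * peval (eval_pt p pm l) (var_coeff (Suc N) d r)) = 0"
      using nonbool by (simp add: peval_eval_pt_var_decomp[OF r M] eval_pt_def)
  qed
  have "scalar_in_Irel p q pm \<gamma> m (var_coeff (Suc N) d r)" if "d \<le> M" for d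
    using IH vars_in_var_coeff[OF r] coeff_vanish that by blast
  then have "scalar_in_Irel p q pm \<gamma> m (\<Sum>d\<in>{..M}. var (Suc N) ^ d * var_coeff (Suc N) d r)"
    using N by (intro scalar_in_Irel_sum scalar_in_Irel_mult vars_in_power vars_in_var) auto
  then show ?thesis using var_decomp[OF M] by simp
qed

text \<open>For an idempotent variable only the values 0 and 1 are available; instead,
  \<open>u\<^sup>d - u\<close> lies in the relation ideal, which reduces \<open>r\<close> to \<open>c\<^sub>0 + u (c\<^sub>1 + \<dots> + c\<^sub>M)\<close>.\<close>

lemma scalar_in_Irel_step_bool:
  fixes r :: "'k::field_char_0 pol"
  assumes IH: "\<And>r. vars_in N r \<Longrightarrow> \<forall>l. peval (eval_pt p pm l) r = (0::'k) \<Longrightarrow> scalar_in_Irel p q pm \<gamma> m r"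
    and N: "Suc N \<le> p+q" and r: "vars_in (Suc N) r" and vanish: "\<forall>l. peval (eval_pt p pm l) r = 0"
    and bool: "lam p pm (Suc N) (Suc N) = -1"
  shows "scalar_in_Irel p q pm \<gamma> m r"
proof -
  from var_degree_bound obtain M where M: "\<forall>mon\<in>Poly_Mapping.keys r. Poly_Mapping.lookup mon (Suc N) \<le> M" ..
  let ?c = "\<lambda>d. var_coeff (Suc N) d r" and ?u = "var (Suc N) :: 'k pol"
  let ?S = "\<Sum>d\<in>{1..M}. ?c d"
  have at_u: "peval (eval_pt p pm (l(Suc N := x))) r
      = peval (eval_pt p pm l) (?c 0) + (of_int (x mod 2) * peval (eval_pt p pm l) ?S
          + (\<Sum>d\<in>{1..M}. peval (eval_pt p pm l) (?c d) * (of_int (x mod 2) ^ d - of_int (x mod 2))))" for l x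
    using bool sum_powers_split_idempotent[of "of_int (x mod 2)" "\<lambda>d. peval (eval_pt p pm l) (?c d)" M]
    by (simp add: peval_eval_pt_var_decomp[OF r M] eval_pt_def peval_sum)
  have c0: "peval (eval_pt p pm l) (?c 0) = 0" for l
    using vanish[rule_format, of "l(Suc N := 0)"] by (simp add: at_u)
  have S: "peval (eval_pt p pm l) ?S = 0" for l
    using vanish[rule_format, of "l(Suc N := 1)"] c0 by (simp add: at_u)
  have coeff_vars: "vars_in (p+q) (?c d)" for d
    using vars_in_mono[OF vars_in_var_coeff[OF r]] N by simp
  have "scalar_in_Irel p q pm \<gamma> m (?c 0)"
    using c0 by (intro IH vars_in_var_coeff[OF r]) auto
  moreover have "scalar_in_Irel p q pm \<gamma> m (?u * ?S)"
    using S N by (intro scalar_in_Irel_mult vars_in_var IH vars_in_sum vars_in_var_coeff[OF r]) auto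
  moreover have "scalar_in_Irel p q pm \<gamma> m (\<Sum>d\<in>{1..M}. ?c d * (?u ^ d - ?u))"
    using N bool coeff_vars by (intro scalar_in_Irel_sum scalar_in_Irel_mult scalar_in_Irel_var_power) auto
  ultimately have "scalar_in_Irel p q pm \<gamma> m (?c 0 + (?u * ?S + (\<Sum>d\<in>{1..M}. ?c d * (?u ^ d - ?u))))"
    by (intro scalar_in_Irel_add)
  then show ?thesis
    using var_decomp[OF M] sum_powers_split_idempotent[of ?u ?c M] by simp
qed

lemma scalar_in_Irel_if_vanishing:
  fixes r :: "'k::field_char_0 pol"
  assumes "N \<le> p+q" "vars_in N r" "\<forall>l. peval (eval_pt p pm l) r = 0"
  shows "scalar_in_Irel p q pm \<gamma> m r"
  using assms
proof (induction N arbitrary: r)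
  case 0
  then have "r = 0" by (intro vars_in_0_vanishing[of r "eval_pt p pm (\<lambda>_. 0)"]) auto
  then show ?case using scalar_in_Irel_zero by simp
next
  case (Suc N)
  have IH: "\<And>r. vars_in N r \<Longrightarrow> \<forall>l. peval (eval_pt p pm l) r = (0::'k) \<Longrightarrow> scalar_in_Irel p q pm \<gamma> m r"
    using Suc.IH Suc.prems(1) by simp
  show ?case
    using scalar_in_Irel_step_bool[OF IH Suc.prems] scalar_in_Irel_step_nonbool[OF IH Suc.prems] by blast
qed

section \<open>Grading and the involution\<close>

(* The shift of the state caused by any word of multidegree e. *)
definition deg_shift :: "nat \<Rightarrow> nat \<Rightarrow> (nat \<Rightarrow> nat \<Rightarrow> int) \<Rightarrow> (nat \<Rightarrow> int) \<Rightarrow> state" where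
  "deg_shift m n \<gamma> e = (\<lambda>v. \<Sum>i\<in>{1..m}. e i * gamma_col n \<gamma> i v, e)"

lemma deg_shift_add: "deg_shift m n \<gamma> (e + e') = deg_shift m n \<gamma> e + deg_shift m n \<gamma> e'"
  by (simp add: deg_shift_def sum.distrib algebra_simps plus_fun_def)

lemma deg_shift_sym:
  assumes "sidx x \<in> {1..m}"
  shows "deg_shift m n \<gamma> (wdeg [x]) = sym_shift n \<gamma> x"
proof (cases x)
  case (GX i)
  have "(\<Sum>i'\<in>{1..m}. (if i' = i then 1 else 0) * gamma_col n \<gamma> i' v)
      = (\<Sum>i'\<in>{1..m}. if i' = i then gamma_col n \<gamma> i' v else 0)" for v
    by (rule sum.cong) auto
  then have "(\<Sum>i'\<in>{1..m}. (if i' = i then 1 else 0) * gamma_col n \<gamma> i' v) = gamma_col n \<gamma> i v" for v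
    using assms GX by (simp add: sum.delta)
  then show ?thesis using GX by (simp add: deg_shift_def sym_shift_def fun_eq_iff)
next
  case (GY i)
  have "(\<Sum>i'\<in>{1..m}. (if i' = i then -1 else 0) * gamma_col n \<gamma> i' v)
      = (\<Sum>i'\<in>{1..m}. if i' = i then - gamma_col n \<gamma> i' v else 0)" for v
    by (rule sum.cong) auto
  then have "(\<Sum>i'\<in>{1..m}. (if i' = i then -1 else 0) * gamma_col n \<gamma> i' v) = - gamma_col n \<gamma> i v" for v
    using assms GY by (simp add: sum.delta)
  then show ?thesis using GY by (simp add: deg_shift_def sym_shift_def fun_eq_iff prod_eq_iff)
qed

lemma word_shift_wdeg: "word_in m w \<Longrightarrow> word_shift n \<gamma> w = deg_shift m n \<gamma> (wdeg w)"
proof (induction w)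
  case Nil then show ?case by (simp add: deg_shift_def zero_fun_def zero_prod_def)
next
  case (Cons x w)
  have "wdeg [x] + wdeg w = wdeg (x # w)"
    using wdeg_append[of "[x]" w] by (simp add: plus_fun_def)
  then have "deg_shift m n \<gamma> (wdeg [x]) + deg_shift m n \<gamma> (wdeg w) = deg_shift m n \<gamma> (wdeg (x # w))"
    by (simp only: deg_shift_add[symmetric])
  with Cons show ?case by (simp add: deg_shift_sym)
qed

lemma deg_shift_inj: "deg_shift m n \<gamma> e = deg_shift m n \<gamma> e' \<Longrightarrow> e = e'"
  by (simp add: deg_shift_def)

lemma word_shift_homog:
  "x \<in> Fcar N m \<Longrightarrow> homog e x \<Longrightarrow> w \<in> Poly_Mapping.keys x \<Longrightarrow> word_shift n \<gamma> w = deg_shift m n \<gamma> e"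
  using Fcar_keys word_shift_wdeg by (fastforce simp: homog_def)

lemma rep_homog:
  assumes "x \<in> Fcar N m" "homog e x"
  shows "rep p pm \<alpha> n \<gamma> x f s = rep p pm \<alpha> n \<gamma> x (\<lambda>_. 1) s * f (s - deg_shift m n \<gamma> e)"
  using word_shift_homog[OF assms] by (simp add: rep_def lin_ext_def sum_distrib_right)

lemma starw_Nil [simp]: "starw [] = []"
  by (simp add: starw_def)

lemma starw_Cons [simp]: "starw (x # w) = starw w @ [sswap x]"
  by (simp add: starw_def)

lemma sym_shift_sswap: "sym_shift n \<gamma> (sswap x) = - sym_shift n \<gamma> x"
  by (cases x) (simp_all add: sym_shift_def)

lemma word_shift_starw: "word_shift n \<gamma> (starw w) = - word_shift n \<gamma> w"
  by (induction w) (simp_all add: sym_shift_sswap algebra_simps)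

lemma word_weight_starw: "word_weight \<alpha> n \<gamma> (starw w) s = word_weight \<alpha> n \<gamma> w (s + word_shift n \<gamma> w)"
proof (induction w arbitrary: s)
  case Nil then show ?case by simp
next
  case (Cons x w)
  have swap: "word_weight \<alpha> n \<gamma> [sswap x] t = word_weight \<alpha> n \<gamma> [x] (t + sym_shift n \<gamma> x)" for t
    by (cases x) (simp_all add: sym_shift_GY_GX)
  have "word_weight \<alpha> n \<gamma> (starw (x # w)) s
      = word_weight \<alpha> n \<gamma> (starw w) s * word_weight \<alpha> n \<gamma> [sswap x] (s - word_shift n \<gamma> (starw w))"
    by (simp add: word_weight_append)
  also have "\<dots> = word_weight \<alpha> n \<gamma> w (s + word_shift n \<gamma> w) * word_weight \<alpha> n \<gamma> [x] (s + word_shift n \<gamma> w + sym_shift n \<gamma> x)"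
    by (simp add: Cons swap word_shift_starw)
  also have "\<dots> = word_weight \<alpha> n \<gamma> (x # w) (s + word_shift n \<gamma> (x # w))"
    by (subst word_weight_Cons) (simp add: algebra_simps)
  finally show ?case .
qed

lemma wdeg_starw: "wdeg (starw w) = (\<lambda>k. - wdeg w k)"
proof (induction w)
  case Nil then show ?case by simp
next
  case (Cons x w)
  have "wdeg [sswap x] = (\<lambda>k. - wdeg [x] k)" by (cases x) (auto simp: fun_eq_iff)
  moreover have "wdeg (x # w) = (\<lambda>k. wdeg [x] k + wdeg w k)" using wdeg_append[of "[x]" w] by simp
  ultimately show ?case using Cons by (simp add: wdeg_append fun_eq_iff)
qed

lemma rep_gstar:
  assumes sign: "pm = 1 \<or> pm = -1"
  shows "rep p pm \<alpha> (p+q) \<gamma> (gstar p q pm \<gamma> a) h s =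
    (\<Sum>w\<in>Poly_Mapping.keys a. eval_state p pm (s + word_shift (p+q) \<gamma> w) (Poly_Mapping.lookup a w) *
        word_weight \<alpha> (p+q) \<gamma> w (s + word_shift (p+q) \<gamma> w) * h (s + word_shift (p+q) \<gamma> w))"
  unfolding gstar_def rep_sum rep_single
  by (intro sum.cong refl) (simp add: eval_state_sigw[OF sign] word_weight_starw word_shift_starw)

lemma rep_gstar_homog:
  assumes sign: "pm = 1 \<or> pm = -1" and "a \<in> Fcar N m" "homog e a"
  shows "rep p pm \<alpha> (p+q) \<gamma> (gstar p q pm \<gamma> a) h s =
     rep p pm \<alpha> (p+q) \<gamma> a (\<lambda>_. 1) (s + deg_shift m (p+q) \<gamma> e) * h (s + deg_shift m (p+q) \<gamma> e)"
  using word_shift_homog[OF assms(2,3)]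
  unfolding rep_gstar[OF sign] by (simp add: rep_def lin_ext_def sum_distrib_right)

lemma rep_eq_0_if_star_mult:
  fixes a :: "'k::alg_closed_field tgw"
  assumes sign: "pm = 1 \<or> pm = -1" and aF: "a \<in> Fcar (p+q) m" and ah: "homog e a"
    and star_mult: "\<forall>f s. rep_tgw p q pm \<gamma> (gmult p q pm \<gamma> (gstar p q pm \<gamma> a) a) f s = 0"
  shows "rep_tgw p q pm \<gamma> a f s = 0"
proof -
  let ?D = "deg_shift m (p+q) \<gamma> e"
  let ?k = "\<lambda>t. rep_tgw p q pm \<gamma> a (\<lambda>_. 1) t"
  have square: "?k (t + ?D) * ?k (t + ?D) = 0" for t
  proof -
    have "rep_tgw p q pm \<gamma> (gmult p q pm \<gamma> (gstar p q pm \<gamma> a) a) (\<lambda>_. 1) t = 0" using star_mult by blast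
    then show ?thesis by (simp only: rep_gmult[OF sign] rep_gstar_homog[OF sign aF ah])
  qed
  have "?k t = 0" for t using square[of "t - ?D"] by simp
  then show ?thesis using rep_homog[OF aF ah, of p pm _ "p+q" \<gamma> f s] by simp
qed

lemma rep_hcomp:
  "rep p pm \<alpha> n \<gamma> (hcomp g x) f s =
     (\<Sum>w\<in>{w\<in>Poly_Mapping.keys x. wdeg w = g}.
        eval_state p pm s (Poly_Mapping.lookup x w) * word_weight \<alpha> n \<gamma> w s * f (s - word_shift n \<gamma> w))"
  unfolding hcomp_def rep_sum rep_single ..

text \<open>Since distinct degrees shift the state by distinct amounts, testing against the indicator
  function of a single state isolates one homogeneous component.\<close>

lemma rep_kernel_graded:
  assumes sign: "pm = 1 \<or> pm = -1"
  shows "graded_set (rep_kernel p q pm \<gamma> m :: 'k::alg_closed_field tgw set)"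
  unfolding graded_set_def
proof (intro ballI allI)
  fix x :: "'k tgw" and g assume x: "x \<in> rep_kernel p q pm \<gamma> m"
  then have xF: "x \<in> Fcar (p+q) m" and x0: "\<And>f s. rep_tgw p q pm \<gamma> x f s = 0" by (auto simp: rep_kernel_def)
  let ?S = "{w\<in>Poly_Mapping.keys x. wdeg w = g}"
  let ?D = "deg_shift m (p+q) \<gamma> g"
  let ?c = "\<lambda>s w. eval_state p pm s (Poly_Mapping.lookup x w) * word_weight (gen_weight p q pm \<gamma>) (p+q) \<gamma> w s"
  have shift: "word_shift (p+q) \<gamma> w = deg_shift m (p+q) \<gamma> (wdeg w)" if "w \<in> Poly_Mapping.keys x" for w
    using that xF Fcar_keys word_shift_wdeg by blast
  have hF: "hcomp g x \<in> Fcar (p+q) m"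
    unfolding hcomp_def by (intro Fcar_sum Fcar_single) (use xF Fcar_keys in auto)
  have "rep_tgw p q pm \<gamma> (hcomp g x) f s = 0" for f s
  proof -
    have "0 = rep_tgw p q pm \<gamma> x (\<lambda>t. if t = s - ?D then 1 else 0) s" using x0 by simp
    also have "\<dots> = (\<Sum>w\<in>Poly_Mapping.keys x. if wdeg w = g then ?c s w else 0)"
      unfolding rep_def lin_ext_def by (intro sum.cong refl) (auto simp: shift dest: deg_shift_inj)
    also have "\<dots> = (\<Sum>w\<in>?S. ?c s w)"
      by (simp add: sum.inter_filter)
    finally have "(\<Sum>w\<in>?S. ?c s w) = 0" by simp
    moreover have "rep_tgw p q pm \<gamma> (hcomp g x) f s = (\<Sum>w\<in>?S. ?c s w) * f (s - ?D)"
      unfolding rep_hcomp sum_distrib_right by (intro sum.cong refl) (simp add: shift)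
    ultimately show ?thesis by simp
  qed
  then show "hcomp g x \<in> rep_kernel p q pm \<gamma> m" using hF by (simp add: rep_kernel_def)
qed

lemma single_sum: "Poly_Mapping.single k (\<Sum>i\<in>A. f i) = (\<Sum>i\<in>A. Poly_Mapping.single k (f i))"
  by (induction A rule: infinite_finite_induct) (simp_all add: single_add)

lemma degree_zero_congruent_scalar:
  fixes x :: "'k::comm_ring_1 tgw"
  assumes sign: "pm = 1 \<or> pm = -1" and x: "x \<in> Fcar (p+q) m" "homog (\<lambda>_. 0) x"
  shows "\<exists>r. vars_in (p+q) r \<and> x - Poly_Mapping.single [] r \<in> Irel p q pm \<gamma> m"
proof -
  have "\<exists>c'. vars_in (p+q) c' \<and>
      Poly_Mapping.single w (Poly_Mapping.lookup x w) - Poly_Mapping.single [] c' \<in> Irel p q pm \<gamma> m"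
    if w: "w \<in> Poly_Mapping.keys x" for w
  proof -
    have "word_in m w" "vars_in (p+q) (Poly_Mapping.lookup x w)" using Fcar_keys[OF x(1) w] by auto
    moreover have "wdeg w = (\<lambda>_. 0)" using x(2) w by (simp add: homog_def)
    ultimately show ?thesis
      using degree_zero_reduces_to_Nil[OF sign, where 'k='k] unfolding reduces_to_def by blast
  qed
  then obtain c where c: "\<And>w. w \<in> Poly_Mapping.keys x \<Longrightarrow> vars_in (p+q) (c w) \<and>
      Poly_Mapping.single w (Poly_Mapping.lookup x w) - Poly_Mapping.single [] (c w) \<in> Irel p q pm \<gamma> m"
    by metis
  have "x - Poly_Mapping.single [] (\<Sum>w\<in>Poly_Mapping.keys x. c w) =
      (\<Sum>w\<in>Poly_Mapping.keys x. Poly_Mapping.single w (Poly_Mapping.lookup x w) - Poly_Mapping.single [] (c w))"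
    by (subst (1) poly_mapping_sum_single[of x]) (simp add: single_sum sum_subtractf)
  also have "\<dots> \<in> Irel p q pm \<gamma> m" using c by (intro is_ideal_sum[OF Irel_ideal]) auto
  finally have "x - Poly_Mapping.single [] (\<Sum>w\<in>Poly_Mapping.keys x. c w) \<in> Irel p q pm \<gamma> m" .
  moreover have "vars_in (p+q) (\<Sum>w\<in>Poly_Mapping.keys x. c w)" using c by (intro vars_in_sum) auto
  ultimately show ?thesis by blast
qed

lemma rep_kernel_degree_zero:
  fixes x :: "'k::{alg_closed_field, field_char_0} tgw"
  assumes sign: "pm = 1 \<or> pm = -1"
    and condI: "gamma_cond_I p q pm \<gamma> m" and condII: "gamma_cond_II p q pm \<gamma> m"
    and x: "x \<in> rep_kernel p q pm \<gamma> m" "homog (\<lambda>_. 0) x"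
  shows "x \<in> Irel p q pm \<gamma> m"
proof -
  have xF: "x \<in> Fcar (p+q) m" using x(1) by (simp add: rep_kernel_def)
  obtain r where r: "vars_in (p+q) r" and d: "x - Poly_Mapping.single [] r \<in> Irel p q pm \<gamma> m"
    using degree_zero_congruent_scalar[OF sign xF x(2)] by blast
  have "x - Poly_Mapping.single [] r \<in> rep_kernel p q pm \<gamma> m"
    using Irel_subset_rep_kernel[OF sign condI condII] d by blast
  with x(1) have "rep_tgw p q pm \<gamma> x f s = 0" "rep_tgw p q pm \<gamma> (x - Poly_Mapping.single [] r) f s = 0" for f s
    unfolding rep_kernel_def by blast+
  then have "rep_tgw p q pm \<gamma> (Poly_Mapping.single [] r) (\<lambda>_. 1) (l, \<lambda>_. 0) = 0" for l
    using rep_diff[of p pm "gen_weight p q pm \<gamma>" "p+q" \<gamma> x "x - Poly_Mapping.single [] r" "\<lambda>_. 1" "(l, \<lambda>_. 0)"]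
    by simp
  then have "peval (eval_pt p pm l) r = 0" for l
    by (simp add: rep_single eval_state_def)
  then have "Poly_Mapping.single [] r \<in> Irel p q pm \<gamma> m"
    using scalar_in_Irel_if_vanishing[of "p+q" p q r pm \<gamma> m] r by simp
  with d have "(x - Poly_Mapping.single [] r) + Poly_Mapping.single [] r \<in> Irel p q pm \<gamma> m"
    by (rule is_ideal_add[OF Irel_ideal])
  then show ?thesis by simp
qed

lemma rep_kernel_subset_Imax:
  fixes \<gamma> :: "nat \<Rightarrow> nat \<Rightarrow> int"
  assumes sign: "pm = 1 \<or> pm = -1"
    and condI: "gamma_cond_I p q pm \<gamma> m" and condII: "gamma_cond_II p q pm \<gamma> m"
  shows "(rep_kernel p q pm \<gamma> m :: 'k::{alg_closed_field, field_char_0} tgw set) \<subseteq> Imax p q pm \<gamma> m"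
  unfolding Imax_def
  using rep_kernel_ideal[OF sign] rep_kernel_graded[OF sign] Irel_subset_rep_kernel[OF sign condI condII]
    rep_kernel_degree_zero[OF sign condI condII] by blast

lemma Imax_degree_zero: "b \<in> Imax p q pm \<gamma> m \<Longrightarrow> homog (\<lambda>_. 0) b \<Longrightarrow> b \<in> Irel p q pm \<gamma> m"
  unfolding Imax_def by blast

lemma keys_single_sub: "w \<in> Poly_Mapping.keys (Poly_Mapping.single k c) \<Longrightarrow> w = k"
  by (simp split: if_splits)

lemma keys_gmult: "w \<in> Poly_Mapping.keys (gmult p q pm \<gamma> f h) \<Longrightarrow>
   \<exists>u\<in>Poly_Mapping.keys f. \<exists>v\<in>Poly_Mapping.keys h. w = u @ v"
proof -
  assume "w \<in> Poly_Mapping.keys (gmult p q pm \<gamma> f h)"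
  then have "w \<in> (\<Union>u\<in>Poly_Mapping.keys f. Poly_Mapping.keys (\<Sum>v\<in>Poly_Mapping.keys h.
      Poly_Mapping.single (u @ v) (Poly_Mapping.lookup f u * sigw p q pm \<gamma> u (Poly_Mapping.lookup h v))))"
    unfolding gmult_def by (rule subsetD[OF keys_sum])
  then obtain u where u: "u \<in> Poly_Mapping.keys f" and wu: "w \<in> Poly_Mapping.keys (\<Sum>v\<in>Poly_Mapping.keys h.
      Poly_Mapping.single (u @ v) (Poly_Mapping.lookup f u * sigw p q pm \<gamma> u (Poly_Mapping.lookup h v)))" by blast
  from wu have "w \<in> (\<Union>v\<in>Poly_Mapping.keys h. Poly_Mapping.keys (
      Poly_Mapping.single (u @ v) (Poly_Mapping.lookup f u * sigw p q pm \<gamma> u (Poly_Mapping.lookup h v))))"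
    by (rule subsetD[OF keys_sum])
  then obtain v where v: "v \<in> Poly_Mapping.keys h" and wv:
    "w \<in> Poly_Mapping.keys (Poly_Mapping.single (u @ v) (Poly_Mapping.lookup f u * sigw p q pm \<gamma> u (Poly_Mapping.lookup h v)))"
    by blast
  from wv have "w = u @ v" by (rule keys_single_sub)
  then show ?thesis using u v by blast
qed

lemma keys_gstar: "w \<in> Poly_Mapping.keys (gstar p q pm \<gamma> f) \<Longrightarrow> \<exists>u\<in>Poly_Mapping.keys f. w = starw u"
proof -
  assume "w \<in> Poly_Mapping.keys (gstar p q pm \<gamma> f)"
  then have "w \<in> (\<Union>u\<in>Poly_Mapping.keys f. Poly_Mapping.keys (
      Poly_Mapping.single (starw u) (sigw p q pm \<gamma> (starw u) (Poly_Mapping.lookup f u))))"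
    unfolding gstar_def by (rule subsetD[OF keys_sum])
  then obtain u where u: "u \<in> Poly_Mapping.keys f" and wu:
     "w \<in> Poly_Mapping.keys (Poly_Mapping.single (starw u) (sigw p q pm \<gamma> (starw u) (Poly_Mapping.lookup f u)))"
    by blast
  from wu have "w = starw u" by (rule keys_single_sub)
  then show ?thesis using u by blast
qed

lemma homog_star_mult:
  assumes "homog g a"
  shows "homog (\<lambda>_. 0) (gmult p q pm \<gamma> (gstar p q pm \<gamma> a) a)"
  unfolding homog_def
proof
  fix w assume "w \<in> Poly_Mapping.keys (gmult p q pm \<gamma> (gstar p q pm \<gamma> a) a)"
  then obtain u v where "u \<in> Poly_Mapping.keys (gstar p q pm \<gamma> a)" "v \<in> Poly_Mapping.keys a" "w = u @ v"
    using keys_gmult by blast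
  moreover obtain u' where "u' \<in> Poly_Mapping.keys a" "u = starw u'" using keys_gstar calculation(1) by blast
  ultimately show "wdeg w = (\<lambda>_. 0)" using assms by (simp add: homog_def wdeg_append wdeg_starw)
qed

theorem mainTheorem6:
  fixes p q m :: nat and pm :: int and \<gamma> :: "nat \<Rightarrow> nat \<Rightarrow> int"
    and g :: "nat \<Rightarrow> int" and a :: "'k::{alg_closed_field, field_char_0} tgw"
  assumes sign: "pm = 1 \<or> pm = -1"
    and condI: "\<forall>j\<in>{1..p+q}. \<forall>i\<in>{1..m}. lam p pm j j = -1 \<longrightarrow> \<bar>\<gamma> j i\<bar> \<le> 1"
    and condII: "\<forall>i\<in>{1..m}. \<forall>i'\<in>{1..m}. i \<noteq> i' \<longrightarrow>
        ((\<exists>k\<in>{1..p+q}. lam p pm k k = -1 \<and> \<gamma> k i * \<gamma> k i' < 0)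
         \<or> (\<forall>k\<in>{1..p+q}. \<gamma> k i * \<gamma> k i' \<le> 0))"
    and a_car: "a \<in> Fcar (p+q) m"
    and a_hom: "homog g a"
    and zero: "gmult p q pm \<gamma> (gstar p q pm \<gamma> a) a \<in> Imax p q pm \<gamma> m"
  shows "a \<in> Imax p q pm \<gamma> m"
proof -
  have I: "gamma_cond_I p q pm \<gamma> m" using condI unfolding gamma_cond_I_def .
  have II: "gamma_cond_II p q pm \<gamma> m" using condII unfolding gamma_cond_II_def .
  have "gmult p q pm \<gamma> (gstar p q pm \<gamma> a) a \<in> Irel p q pm \<gamma> m"
    using Imax_degree_zero[OF zero homog_star_mult[OF a_hom]] .
  then have "\<forall>f s. rep_tgw p q pm \<gamma> (gmult p q pm \<gamma> (gstar p q pm \<gamma> a) a) f s = 0"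
    using Irel_subset_rep_kernel[OF sign I II] by (auto simp: rep_kernel_def)
  then have "a \<in> rep_kernel p q pm \<gamma> m"
    using rep_eq_0_if_star_mult[OF sign a_car a_hom] a_car by (simp add: rep_kernel_def)
  then show ?thesis
    using rep_kernel_subset_Imax[OF sign I II] by blast
qed

end
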